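(* For all $\tau\in\mathbb{H}$, $$s\!\left(\frac{-1}{\tau}\right)=\frac{\varepsilon_1 s(\tau)-\eta_3 t(\tau)+1}{s(\tau)-\varepsilon_1 t(\tau)-\eta_3}=\frac{\varepsilon_1 s(\tau)+(\varepsilon_1^2-\varepsilon_1-1)t(\tau)+1}{s(\tau)-\varepsilon_1 t(\tau)+\varepsilon_1^2-\varepsilon_1-1},$$ $$t\!\left(\frac{-1}{\tau}\right)=\frac{-\eta_3 s(\tau)-t(\tau)-\varepsilon_1}{s(\tau)-\varepsilon_1 t(\tau)-\eta_3}=\frac{(\varepsilon_1^2-\varepsilon_1-1)s(\tau)-t(\tau)-\varepsilon_1}{s(\tau)-\varepsilon_1 t(\tau)+\varepsilon_1^2-\varepsilon_1-1}.$$
   Context: Let $\tau\in\mathbb{H}$, $q=e^{2\pi i\tau}$, $q^{\alpha}=e^{2\pi i\alpha\tau}$. Define $s(\tau)=q^{-3/7}\prod_{n\ge1}\frac{(1-q^{7n-3})(1-q^{7n-4})}{(1-q^{7n-1})(1-q^{7n-6})}$ and $t(\tau)=q^{-2/7}\prod_{n\ge1}\frac{(1-q^{7n-2})(1-q^{7n-5})}{(1-q^{7n-1})(1-q^{7n-6})}$ (so $s=u/w$, $t=v/w$ with $u=q^{1/56}\prod_{k\ge0}(1-q^{7k+3})(1-q^{7k+4})(1-q^{7k+7})$, $v=q^{9/56}\prod_{k\ge0}(1-q^{7k+2})(1-q^{7k+5})(1-q^{7k+7})$, $w=q^{25/56}\prod_{k\ge0}(1-q^{7k+1})(1-q^{7k+6})(1-q^{7k+7})$).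 Let $\zeta_7=e^{2\pi i/7}$, $\eta_i=\zeta_7^i+\zeta_7^{-i}$, and $\varepsilon_1=1+\eta_1=1+\zeta_7+\zeta_7^6$. *)

theory Defs
  imports "HOL-Analysis.Analysis"
begin

definition qpow :: "complex \<Rightarrow> real \<Rightarrow> complex" where
  "qpow \<tau> \<alpha> = exp (2 * of_real pi * \<i> * of_real \<alpha> * \<tau>)"

definition s_fun :: "complex \<Rightarrow> complex" where
  "s_fun \<tau> = qpow \<tau> (-3/7) *
     (\<Prod>n. ((1 - qpow \<tau> (real (7 * Suc n - 3))) * (1 - qpow \<tau> (real (7 * Suc n - 4)))) /
            ((1 - qpow \<tau> (real (7 * Suc n - 1))) * (1 - qpow \<tau> (real (7 * Suc n - 6)))))"

definition t_fun :: "complex \<Rightarrow> complex" where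
  "t_fun \<tau> = qpow \<tau> (-2/7) *
     (\<Prod>n. ((1 - qpow \<tau> (real (7 * Suc n - 2))) * (1 - qpow \<tau> (real (7 * Suc n - 5)))) /
            ((1 - qpow \<tau> (real (7 * Suc n - 1))) * (1 - qpow \<tau> (real (7 * Suc n - 6)))))"

definition zeta7 :: complex where
  "zeta7 = exp (2 * of_real pi * \<i> / 7)"

definition eta7 :: "nat \<Rightarrow> complex" where
  "eta7 i = zeta7 ^ i + inverse zeta7 ^ i"

definition eps1 :: complex where
  "eps1 = 1 + eta7 1"

end

theory Submission
  imports Defs "HOL-Complex_Analysis.Complex_Analysis"
begin

text \<open>
  By the Jacobi triple product, \<open>u\<close>, \<open>v\<close>, \<open>w\<close> are the theta functions
  \<open>f(c, \<tau>) = \<Sum>\<^sub>n (-1)\<^sup>n q\<^bsup>7(n-c)\<^sup>2/2\<^esup>\<close> at \<open>c = 1/14, 3/14, 5/14\<close> (\<open>theta7\<close> below),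
  so \<open>s = f(1/14, \<tau>) / f(5/14, \<tau>)\<close> and \<open>t = f(3/14, \<tau>) / f(5/14, \<tau>)\<close>.
  Jacobi's inversion formula for the theta function, obtained from Liouville's theorem applied to
  the quotient of its two sides (which share quasi-periods and simple zeros), expresses
  \<open>f(c, -1/\<tau>)\<close> through the series \<open>\<Sum>\<^sub>m q\<^bsup>(2m+1)\<^sup>2/56\<^esup> e\<^bsup>\<pi>ic(2m+1)\<^esup>\<close>.
  Splitting \<open>m\<close> by its residue modulo 7 turns this into a combination of the
  \<open>f((2r+1)/14, \<tau>)\<close> with powers of \<open>\<xi> = e\<^bsup>\<pi>i/14\<^esup>\<close> as coefficients. The symmetries
  \<open>f(-c) = f(c)\<close> and \<open>f(1-c) = -f(c)\<close> leave a linear substitution of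
  \<open>(f(1/14), f(3/14), f(5/14))\<close> whose entries are \<open>\<plusminus>1\<close>, \<open>\<epsilon>\<^sub>1\<close> and \<open>-\<eta>\<^sub>3\<close> up to a
  common factor; dividing gives the transformation of \<open>s\<close> and \<open>t\<close>, and
  \<open>\<epsilon>\<^sub>1\<^sup>2 - \<epsilon>\<^sub>1 - 1 = -\<eta>\<^sub>3\<close> identifies the two forms.
\<close>

section \<open>Gaussian binomial coefficients\<close>

fun qbinomial :: "'a::comm_ring_1 \<Rightarrow> nat \<Rightarrow> nat \<Rightarrow> 'a" where
  "qbinomial Q n 0 = 1"
| "qbinomial Q 0 (Suc k) = 0"
| "qbinomial Q (Suc n) (Suc k) = Q ^ Suc k * qbinomial Q n (Suc k) + qbinomial Q n k"

lemma qbinomial_eq_0: "n < k \<Longrightarrow> qbinomial Q n k = 0"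
  by (induction Q n k rule: qbinomial.induct) auto

lemma qbinomial_diag [simp]: "qbinomial Q n n = 1"
  by (induction n) (simp_all add: qbinomial_eq_0)

lemma choose_two_double: "2 * (k choose 2) + k = k * k"
  by (induction k) (auto simp: numeral_2_eq_2 algebra_simps)

lemma qbinomial_theorem:
  fixes Q t :: "'a::comm_ring_1"
  shows "(\<Prod>k<n. 1 + Q ^ k * t) = (\<Sum>k\<le>n. Q ^ (k choose 2) * qbinomial Q n k * t ^ k)"
proof (induction n arbitrary: t)
  case 0
  then show ?case by (simp add: binomial_eq_0)
next
  case (Suc n)
  define g where "g k = Q ^ (k choose 2) * qbinomial Q n k * (Q * t) ^ k" for k
  have "(\<Prod>k<Suc n. 1 + Q ^ k * t) = (1 + t) * (\<Prod>k<n. 1 + Q ^ k * (Q * t))"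
    by (subst prod.lessThan_Suc_shift) (simp add: algebra_simps)
  also have "\<dots> = (1 + t) * (\<Sum>k\<le>n. g k)"
    by (simp add: Suc.IH g_def)
  also have "\<dots> = 1 + (\<Sum>k\<le>n. g (Suc k) + t * g k)"
  proof -
    have "(\<Sum>k\<le>n. g k) = (\<Sum>k\<le>Suc n. g k)"
      by (simp add: g_def qbinomial_eq_0)
    also have "\<dots> = 1 + (\<Sum>k\<le>n. g (Suc k))"
      by (subst sum.atMost_Suc_shift) (simp add: g_def binomial_eq_0)
    finally have "(1 + t) * (\<Sum>k\<le>n. g k) = 1 + (\<Sum>k\<le>n. g (Suc k)) + t * (\<Sum>k\<le>n. g k)"
      by (simp add: algebra_simps)
    then show ?thesis
      by (simp add: sum.distrib sum_distrib_left)
  qed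
  also have "\<dots> = (\<Sum>k\<le>Suc n. Q ^ (k choose 2) * qbinomial Q (Suc n) k * t ^ k)"
    by (subst sum.atMost_Suc_shift)
       (simp add: g_def numeral_2_eq_2 algebra_simps power_add power_mult_distrib)
  finally show ?case .
qed

definition qpochhammer :: "'a::comm_ring_1 \<Rightarrow> nat \<Rightarrow> 'a" where
  "qpochhammer Q n = (\<Prod>i<n. 1 - Q ^ Suc i)"

lemma qpochhammer_0 [simp]: "qpochhammer Q 0 = 1"
  by (simp add: qpochhammer_def)

lemma qpochhammer_Suc: "qpochhammer Q (Suc n) = qpochhammer Q n * (1 - Q ^ Suc n)"
  by (simp add: qpochhammer_def)

lemma qbinomial_qpochhammer:
  "k \<le> n \<Longrightarrow> qbinomial Q n k * qpochhammer Q k * qpochhammer Q (n - k) = qpochhammer Q n"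
proof (induction n arbitrary: k)
  case 0
  then show ?case by simp
next
  case (Suc n)
  show ?case
  proof (cases k)
    case 0
    then show ?thesis by simp
  next
    case (Suc j)
    show ?thesis
    proof (cases "j = n")
      case True
      then show ?thesis
        using Suc by (simp add: qpochhammer_Suc qbinomial_eq_0 algebra_simps)
    next
      case False
      with Suc Suc.prems have "j < n" by simp
      then have nj: "n - j = Suc (n - Suc j)"
        and pw: "Q ^ Suc j * Q ^ (n - j) = Q ^ Suc n"
        by (simp_all only: power_add[symmetric]) simp_all
      have "qbinomial Q (Suc n) k * qpochhammer Q k * qpochhammer Q (Suc n - k)
          = Q ^ Suc j * (qbinomial Q n (Suc j) * qpochhammer Q (Suc j) * qpochhammer Q (n - Suc j))
              * (1 - Q ^ (n - j))
            + (qbinomial Q n j * qpochhammer Q j * qpochhammer Q (n - j)) * (1 - Q ^ Suc j)"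
        using Suc by (simp add: nj qpochhammer_Suc algebra_simps)
      also have "\<dots> = qpochhammer Q n * (Q ^ Suc j * (1 - Q ^ (n - j)) + (1 - Q ^ Suc j))"
        unfolding Suc.IH[OF less_imp_le[OF \<open>j < n\<close>]] Suc.IH[OF Suc_leI[OF \<open>j < n\<close>]]
        by (simp only: algebra_simps)
      also have "Q ^ Suc j * (1 - Q ^ (n - j)) + (1 - Q ^ Suc j) = 1 - Q ^ Suc n"
        using pw by (simp add: right_diff_distrib)
      finally show ?thesis by (simp add: qpochhammer_Suc)
    qed
  qed
qed

section \<open>The Jacobi triple product\<close>

lemma prod_lessThan_add:
  fixes m n :: nat
  shows "(\<Prod>k<m+n. f k) = (\<Prod>k<m. f k) * (\<Prod>k<n. f (m+k))"
  by (induction n) (auto simp: algebra_simps)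

lemma sum_lessThan_add:
  fixes m n :: nat
  shows "(\<Sum>k<m+n. f k) = (\<Sum>k<m. f k) + (\<Sum>k<n. f (m+k))"
  by (induction n) (auto simp: algebra_simps)

lemma prod_odd_powers: "(\<Prod>n<N. (v::'a::comm_monoid_mult) ^ (2*n+1)) = v ^ (N*N)"
proof (induction N)
  case (Suc N)
  have "N * N + (2 * N + 1) = Suc N * Suc N" by simp
  then show ?case using Suc by (simp only: prod.lessThan_Suc power_add[symmetric])
qed simp

text \<open>The finite triple product is the \<open>q\<close>-binomial theorem with \<open>Q = x\<^sup>2\<close> and
  \<open>t = w / x\<^bsup>2N-1\<^esup>\<close>, re-indexed around the middle index \<open>N\<close>.\<close>

context
  fixes x w :: "'a::field" and N :: nat
  assumes x0: "x \<noteq> 0" and w0: "w \<noteq> 0" and N1: "1 \<le> N"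
begin

lemma jtp_shifted_factor_upper: "1 + (x^2) ^ (N+n) * (w / x ^ (2*N-1)) = 1 + x ^ (2*n+1) * w"
proof -
  have "(2*n+1) + (2*N-1) = 2*(N+n)" using N1 by simp
  then have "x ^ (2*(N+n)) = x ^ (2*n+1) * x ^ (2*N-1)" by (metis power_add)
  then show ?thesis using x0 by (simp add: power_mult[symmetric])
qed

lemma jtp_shifted_factor_lower:
  "n < N \<Longrightarrow> 1 + (x^2) ^ (N - Suc n) * (w / x ^ (2*N-1)) = w / x ^ (2*n+1) * (1 + x ^ (2*n+1) / w)"
proof -
  assume "n < N"
  then have "2*(N - Suc n) + (2*n+1) = 2*N-1" by simp
  then have "x ^ (2*(N - Suc n)) * x ^ (2*n+1) = x ^ (2*N-1)" by (metis power_add)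
  then show ?thesis using x0 w0 by (simp add: power_mult[symmetric] field_simps)
qed

lemma jtp_shifted_product:
  "(\<Prod>k<2*N. 1 + (x^2) ^ k * (w / x ^ (2*N-1)))
     = w ^ N / x ^ (N*N) * (\<Prod>k<N. (1 + x ^ (2*k+1) * w) * (1 + x ^ (2*k+1) / w))"
proof -
  let ?f = "\<lambda>k. 1 + (x^2) ^ k * (w / x ^ (2*N-1))"
  have "(\<Prod>k<2*N. ?f k) = (\<Prod>k<N. ?f k) * (\<Prod>n<N. ?f (N+n))"
    by (simp only: mult_2 prod_lessThan_add)
  also have "(\<Prod>k<N. ?f k) = (\<Prod>n<N. ?f (N - Suc n))"
    by (rule prod.nat_diff_reindex[symmetric])
  also have "\<dots> = (\<Prod>n<N. w / x ^ (2*n+1) * (1 + x ^ (2*n+1) / w))"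
    by (intro prod.cong refl jtp_shifted_factor_lower) simp
  also have "\<dots> = w ^ N / x ^ (N*N) * (\<Prod>n<N. 1 + x ^ (2*n+1) / w)"
    by (simp only: prod.distrib prod_dividef prod_constant card_lessThan prod_odd_powers)
  also have "(\<Prod>n<N. ?f (N+n)) = (\<Prod>n<N. 1 + x ^ (2*n+1) * w)"
    by (simp only: jtp_shifted_factor_upper)
  finally show ?thesis
    by (simp only: prod.distrib mult_ac)
qed

lemma jtp_shifted_power_ratio:
  assumes "2 * (k choose 2) + N*N = m + (2*N-1)*k"
  shows "(x^2) ^ (k choose 2) * (w / x ^ (2*N-1)) ^ k = w ^ k / x ^ (N*N) * x ^ m"
proof -
  have "x ^ (2 * (k choose 2)) * x ^ (N*N) = x ^ m * x ^ ((2*N-1)*k)"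
    using assms by (metis power_add)
  then show ?thesis
    using x0 by (simp add: power_mult[symmetric] power_divide field_simps)
qed

lemma jtp_shifted_term_upper:
  "(x^2) ^ ((N+n) choose 2) * qbinomial (x^2) (2*N) (N+n) * (w / x ^ (2*N-1)) ^ (N+n)
     = w ^ N / x ^ (N*N) * (x ^ (n*n) * w ^ n * qbinomial (x^2) (2*N) (N+n))"
proof -
  have "2 * ((N+n) choose 2) + (N+n) = (N+n) * (N+n)" by (rule choose_two_double)
  moreover have "(2*N-1) * (N+n) + (N+n) = 2*N*(N+n)"
    using N1 by (cases N) (simp_all add: algebra_simps)
  ultimately have "2 * ((N+n) choose 2) + N*N = n*n + (2*N-1)*(N+n)"
    by (simp add: algebra_simps)
  note ratio = jtp_shifted_power_ratio[OF this]
  have "(x^2) ^ ((N+n) choose 2) * qbinomial (x^2) (2*N) (N+n) * (w / x ^ (2*N-1)) ^ (N+n)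
      = qbinomial (x^2) (2*N) (N+n) * ((x^2) ^ ((N+n) choose 2) * (w / x ^ (2*N-1)) ^ (N+n))"
    by (simp only: mult_ac)
  also have "\<dots> = qbinomial (x^2) (2*N) (N+n) * (w ^ (N+n) / x ^ (N*N) * x ^ (n*n))"
    by (simp only: ratio)
  finally show ?thesis
    by (simp add: power_add divide_inverse mult_ac)
qed

lemma jtp_shifted_term_lower:
  assumes "n < N"
  shows "(x^2) ^ ((N - Suc n) choose 2) * qbinomial (x^2) (2*N) (N - Suc n) * (w / x ^ (2*N-1)) ^ (N - Suc n)
     = w ^ N / x ^ (N*N) * (x ^ (Suc n * Suc n) * (1/w) ^ Suc n * qbinomial (x^2) (2*N) (N - Suc n))"
proof -
  define k where "k = N - Suc n"
  have N: "N = k + Suc n" using assms by (simp add: k_def)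
  have "2 * (k choose 2) + k = k * k" by (rule choose_two_double)
  moreover have "(2*N-1) * k + k = 2*N*k"
    using N1 by (cases N) (simp_all add: algebra_simps)
  ultimately have "2 * (k choose 2) + N*N = Suc n * Suc n + (2*N-1)*k"
    unfolding N by (simp add: algebra_simps)
  note ratio = jtp_shifted_power_ratio[OF this]
  have wk: "w ^ k = w ^ N * (1/w) ^ Suc n"
    using w0 unfolding N by (simp add: power_add field_simps)
  have "(x^2) ^ (k choose 2) * qbinomial (x^2) (2*N) k * (w / x ^ (2*N-1)) ^ k
      = qbinomial (x^2) (2*N) k * ((x^2) ^ (k choose 2) * (w / x ^ (2*N-1)) ^ k)"
    by (simp only: mult_ac)
  also have "\<dots> = qbinomial (x^2) (2*N) k * (w ^ k / x ^ (N*N) * x ^ (Suc n * Suc n))"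
    by (simp only: ratio)
  finally show ?thesis
    unfolding k_def[symmetric] by (simp add: wk divide_inverse mult_ac)
qed

lemma jacobi_triple_product_finite_pos:
  "(\<Prod>k<N. (1 + x ^ (2*k+1) * w) * (1 + x ^ (2*k+1) / w))
     = (\<Sum>n\<le>N. x ^ (n*n) * w ^ n * qbinomial (x^2) (2*N) (N+n))
     + (\<Sum>n<N. x ^ (Suc n * Suc n) * (1/w) ^ Suc n * qbinomial (x^2) (2*N) (N - Suc n))"
proof -
  define g where "g k = (x^2) ^ (k choose 2) * qbinomial (x^2) (2*N) k * (w / x ^ (2*N-1)) ^ k" for k
  have "(\<Sum>k\<le>2*N. g k) = (\<Sum>k<N + Suc N. g k)"
    by (simp add: lessThan_Suc_atMost[symmetric] mult_2)
  also have "\<dots> = (\<Sum>n<N. g (N - Suc n)) + (\<Sum>n\<le>N. g (N+n))"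
    by (simp only: sum_lessThan_add lessThan_Suc_atMost sum.nat_diff_reindex)
  also have "\<dots> = w ^ N / x ^ (N*N) *
      ((\<Sum>n\<le>N. x ^ (n*n) * w ^ n * qbinomial (x^2) (2*N) (N+n))
     + (\<Sum>n<N. x ^ (Suc n * Suc n) * (1/w) ^ Suc n * qbinomial (x^2) (2*N) (N - Suc n)))"
  proof -
    have lower: "(\<Sum>n<N. g (N - Suc n)) = (\<Sum>n<N. w ^ N / x ^ (N*N) *
        (x ^ (Suc n * Suc n) * (1/w) ^ Suc n * qbinomial (x^2) (2*N) (N - Suc n)))"
      unfolding g_def by (intro sum.cong refl jtp_shifted_term_lower) simp
    have upper: "(\<Sum>n\<le>N. g (N+n)) = (\<Sum>n\<le>N. w ^ N / x ^ (N*N) *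
        (x ^ (n*n) * w ^ n * qbinomial (x^2) (2*N) (N+n)))"
      unfolding g_def by (intro sum.cong refl jtp_shifted_term_upper)
    show ?thesis
      unfolding lower upper sum_distrib_left[symmetric] distrib_left by (rule add.commute)
  qed
  finally have "(\<Prod>k<2*N. 1 + (x^2) ^ k * (w / x ^ (2*N-1))) = \<dots>"
    unfolding g_def by (simp only: qbinomial_theorem)
  moreover have "w ^ N / x ^ (N*N) \<noteq> 0"
    using x0 w0 by simp
  ultimately show ?thesis
    unfolding jtp_shifted_product by (rule mult_left_cancel[THEN iffD1, rotated])
qed

end

lemma jacobi_triple_product_finite:
  fixes x w :: "'a::field"
  assumes "x \<noteq> 0" "w \<noteq> 0"
  shows "(\<Prod>k<N. (1 + x ^ (2*k+1) * w) * (1 + x ^ (2*k+1) / w))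
     = (\<Sum>n\<le>N. x ^ (n*n) * w ^ n * qbinomial (x^2) (2*N) (N+n))
     + (\<Sum>n<N. x ^ (Suc n * Suc n) * (1/w) ^ Suc n * qbinomial (x^2) (2*N) (N - Suc n))"
proof (cases "N = 0")
  case False
  then show ?thesis by (intro jacobi_triple_product_finite_pos[OF assms]) simp
qed simp

lemma convergent_prod_1_plus_summable:
  fixes a :: "nat \<Rightarrow> 'a::{real_normed_field, banach}"
  assumes "summable (\<lambda>n. norm (a n))"
  shows "convergent_prod (\<lambda>n. 1 + a n)"
  by (rule abs_convergent_prod_imp_convergent_prod, rule summable_imp_abs_convergent_prod)
     (use assms in simp)

lemma summable_norm_power_Suc:
  fixes Q :: "'a::real_normed_field"
  shows "norm Q < 1 \<Longrightarrow> summable (\<lambda>i. norm (Q ^ Suc i))"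
  by (subst summable_Suc_iff) (simp add: norm_power summable_geometric)

lemma convergent_prod_1_minus_power:
  fixes Q :: "'a::{real_normed_field, banach}"
  shows "norm Q < 1 \<Longrightarrow> convergent_prod (\<lambda>i. 1 - Q ^ Suc i)"
  using convergent_prod_1_plus_summable[of "\<lambda>i. - (Q ^ Suc i)"] summable_norm_power_Suc[of Q]
  by simp

lemma convergent_prod_1_plus_power:
  fixes Q :: "'a::{real_normed_field, banach}"
  shows "norm Q < 1 \<Longrightarrow> convergent_prod (\<lambda>i. 1 + Q ^ Suc i)"
  using convergent_prod_1_plus_summable[of "\<lambda>i. Q ^ Suc i"] summable_norm_power_Suc[of Q]
  by simp

lemma norm_power_Suc_less_1:
  fixes Q :: "'a::real_normed_field"
  shows "norm Q < 1 \<Longrightarrow> norm (Q ^ Suc i) < 1"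
  unfolding norm_power by (simp del: power_Suc add: power_less_one_iff)

lemma power_Suc_neq_1:
  fixes Q :: "'a::real_normed_field"
  shows "norm Q < 1 \<Longrightarrow> 1 - Q ^ Suc i \<noteq> 0"
  using norm_power_Suc_less_1[of Q i] by auto

definition qpochhammer_inf :: "complex \<Rightarrow> complex" where
  "qpochhammer_inf Q = (\<Prod>i. 1 - Q ^ Suc i)"

lemma qpochhammer_inf_nonzero: "norm Q < 1 \<Longrightarrow> qpochhammer_inf Q \<noteq> 0"
  unfolding qpochhammer_inf_def
  by (rule prodinf_nonzero[OF convergent_prod_1_minus_power power_Suc_neq_1])

lemma qpochhammer_tendsto: "norm Q < 1 \<Longrightarrow> qpochhammer Q \<longlonglongrightarrow> qpochhammer_inf Q"
proof -
  assume "norm Q < 1"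
  then have "(\<lambda>n. qpochhammer Q (Suc n)) \<longlonglongrightarrow> qpochhammer_inf Q"
    unfolding qpochhammer_inf_def qpochhammer_def lessThan_Suc_atMost
    by (rule convergent_prod_LIMSEQ[OF convergent_prod_1_minus_power])
  then show ?thesis by (rule filterlim_sequentially_Suc[THEN iffD1])
qed

lemma norm_qpochhammer_le:
  assumes "norm (Q::complex) < 1"
  shows "norm (qpochhammer Q n) \<le> (\<Prod>i. 1 + norm Q ^ Suc i)"
proof -
  have "norm (qpochhammer Q n) \<le> (\<Prod>i<n. 1 + norm Q ^ Suc i)"
    unfolding qpochhammer_def prod_norm[symmetric]
    by (intro prod_mono conjI norm_ge_zero)
       (metis norm_one norm_power norm_triangle_ineq4)
  also have "\<dots> \<le> (\<Prod>i. 1 + norm Q ^ Suc i)"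
    by (rule prod_le_prodinf) (use convergent_prod_1_plus_power[of "norm Q"] assms in auto)
  finally show ?thesis .
qed

lemma norm_qpochhammer_ge:
  assumes "norm (Q::complex) < 1"
  shows "(\<Prod>i. 1 - norm Q ^ Suc i) \<le> norm (qpochhammer Q n)"
proof -
  have le1: "norm Q ^ Suc i \<le> 1" for i
    using norm_power_Suc_less_1[OF assms, of i] unfolding norm_power by (rule less_imp_le)
  have "(\<Prod>i. 1 - norm Q ^ Suc i) \<le> (\<Prod>i<n. 1 - norm Q ^ Suc i)"
    by (rule prod_ge_prodinf) (use convergent_prod_1_minus_power[of "norm Q"] assms le1 in auto)
  also have "\<dots> \<le> norm (qpochhammer Q n)"
    unfolding qpochhammer_def prod_norm[symmetric]
  proof (intro prod_mono conjI)
    fix i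
    show "0 \<le> 1 - norm Q ^ Suc i" using le1[of i] by simp
    show "1 - norm Q ^ Suc i \<le> norm (1 - Q ^ Suc i)"
      using norm_triangle_ineq2[of 1 "Q ^ Suc i"] by (simp only: norm_one norm_power)
  qed
  finally show ?thesis .
qed

lemma prodinf_1_minus_power_pos: "0 \<le> (r::real) \<Longrightarrow> r < 1 \<Longrightarrow> 0 < (\<Prod>i. 1 - r ^ Suc i)"
  by (rule less_0_prodinf[OF convergent_prod_1_minus_power])
     (use norm_power_Suc_less_1[of r] in auto)

lemma qpochhammer_nonzero: "norm (Q::complex) < 1 \<Longrightarrow> qpochhammer Q n \<noteq> 0"
  using norm_qpochhammer_ge[of Q n] prodinf_1_minus_power_pos[of "norm Q"] by auto

lemma qbinomial_bounded:
  assumes "norm (Q::complex) < 1"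
  shows "\<exists>B. \<forall>n k. norm (qbinomial Q n k) \<le> B"
proof -
  define U where "U = (\<Prod>i. 1 + norm Q ^ Suc i)"
  define L where "L = (\<Prod>i. 1 - norm Q ^ Suc i)"
  have L: "0 < L" unfolding L_def by (rule prodinf_1_minus_power_pos) (use assms in auto)
  have U: "0 \<le> U" using norm_qpochhammer_le[OF assms, of 0] by (simp add: U_def)
  have "norm (qbinomial Q n k) \<le> U / (L * L)" for n k
  proof (cases "k \<le> n")
    case True
    have "qbinomial Q n k = qpochhammer Q n / (qpochhammer Q k * qpochhammer Q (n - k))"
      using qbinomial_qpochhammer[OF True, of Q] qpochhammer_nonzero[OF assms]
      by (simp add: field_simps)
    then have "norm (qbinomial Q n k)
        = norm (qpochhammer Q n) / (norm (qpochhammer Q k) * norm (qpochhammer Q (n - k)))"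
      by (simp add: norm_divide norm_mult)
    also have "\<dots> \<le> U / (L * L)"
      unfolding U_def L_def
      by (intro frac_le mult_mono norm_qpochhammer_le norm_qpochhammer_ge mult_pos_pos assms)
         (use L U in \<open>auto simp: U_def L_def\<close>)
    finally show ?thesis .
  qed (use L U in \<open>simp add: qbinomial_eq_0\<close>)
  then show ?thesis by blast
qed

lemma qbinomial_tendsto:
  assumes Q: "norm Q < 1"
    and k: "filterlim k at_top F" and nk: "filterlim (\<lambda>i. n i - k i) at_top F"
  shows "((\<lambda>i. qbinomial Q (n i) (k i)) \<longlongrightarrow> 1 / qpochhammer_inf Q) F"
proof -
  have n: "filterlim n at_top F"
    by (rule filterlim_at_top_mono[OF nk]) simp
  have lim: "filterlim f at_top F \<Longrightarrow> ((\<lambda>i. qpochhammer Q (f i)) \<longlongrightarrow> qpochhammer_inf Q) F" for f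
    by (rule filterlim_compose[OF qpochhammer_tendsto[OF Q]])
  have "((\<lambda>i. qpochhammer Q (n i) / (qpochhammer Q (k i) * qpochhammer Q (n i - k i)))
          \<longlongrightarrow> qpochhammer_inf Q / (qpochhammer_inf Q * qpochhammer_inf Q)) F"
    by (intro tendsto_intros lim n k nk) (simp add: qpochhammer_inf_nonzero[OF Q])
  moreover have "eventually (\<lambda>i. k i \<le> n i) F"
    using filterlim_at_top[THEN iffD1, OF nk, rule_format, of 1] by eventually_elim simp
  then have "eventually (\<lambda>i. qpochhammer Q (n i) / (qpochhammer Q (k i) * qpochhammer Q (n i - k i))
      = qbinomial Q (n i) (k i)) F"
    by eventually_elim
       (simp add: qbinomial_qpochhammer[symmetric] qpochhammer_nonzero[OF Q])
  ultimately show ?thesis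
    using qpochhammer_inf_nonzero[OF Q] by (simp add: tendsto_cong)
qed

lemma summable_power_square:
  fixes r c :: real
  assumes r: "0 \<le> r" "r < 1" and c: "0 \<le> c"
  shows "summable (\<lambda>n. r ^ (n*n) * c ^ n)"
proof (rule summable_comparison_test_ev)
  have "(\<lambda>n. r ^ n * c) \<longlonglongrightarrow> 0 * c"
    by (intro tendsto_intros LIMSEQ_power_zero) (use r in auto)
  then have "eventually (\<lambda>n. r ^ n * c < 1/2) sequentially"
    by (intro order_tendstoD) auto
  then show "eventually (\<lambda>n. norm (r ^ (n*n) * c ^ n) \<le> (1/2) ^ n) sequentially"
  proof eventually_elim
    case (elim n)
    have "norm (r ^ (n*n) * c ^ n) = (r ^ n * c) ^ n"
      using r c by (simp add: power_mult power_mult_distrib)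
    also have "\<dots> \<le> (1/2) ^ n"
      by (rule power_mono) (use elim r c in auto)
    finally show ?case .
  qed
qed (simp add: summable_geometric)

lemma summable_power_square_Suc:
  fixes r c :: real
  assumes "0 \<le> r" "r < 1" "0 \<le> c"
  shows "summable (\<lambda>n. r ^ (Suc n * Suc n) * c ^ Suc n)"
  using summable_power_square[OF assms] by (subst summable_Suc_iff[where f="\<lambda>n. r ^ (n*n) * c ^ n"])

lemma summable_odd_powers:
  fixes x :: "'a::real_normed_field"
  assumes "norm x < 1"
  shows "summable (\<lambda>n. norm x ^ (2*n+k) * c)"
proof -
  have "summable (\<lambda>n. (norm x ^ k * c) * (norm x ^ 2) ^ n)"
    by (intro summable_mult summable_geometric) (use assms in \<open>auto simp: abs_square_less_1\<close>)
  then show ?thesis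
    by (simp add: power_add power_mult[symmetric] mult_ac)
qed

lemma convergent_prod_odd_powers:
  fixes x w :: complex
  assumes "norm x < 1"
  shows "convergent_prod (\<lambda>n. 1 + x ^ (2*n+1) * w)"
  by (rule convergent_prod_1_plus_summable)
     (use summable_odd_powers[OF assms, of 1 "norm w"] in \<open>simp add: norm_mult norm_power\<close>)

definition jacobi_prod :: "complex \<Rightarrow> complex \<Rightarrow> complex" where
  "jacobi_prod x w = (\<Prod>n. (1 + x ^ (2*n+1) * w) * (1 + x ^ (2*n+1) / w))"

lemma convergent_prod_jacobi:
  assumes "norm (x::complex) < 1"
  shows "convergent_prod (\<lambda>n. (1 + x ^ (2*n+1) * w) * (1 + x ^ (2*n+1) / w))"
  using convergent_prod_mult[OF convergent_prod_odd_powers[OF assms, of w]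
      convergent_prod_odd_powers[OF assms, of "1/w"]]
  by simp

lemma jacobi_prod_tendsto:
  assumes "norm (x::complex) < 1"
  shows "(\<lambda>N. \<Prod>k<N. (1 + x ^ (2*k+1) * w) * (1 + x ^ (2*k+1) / w)) \<longlonglongrightarrow> jacobi_prod x w"
proof -
  have "(\<lambda>N. \<Prod>k<Suc N. (1 + x ^ (2*k+1) * w) * (1 + x ^ (2*k+1) / w)) \<longlonglongrightarrow> jacobi_prod x w"
    unfolding jacobi_prod_def lessThan_Suc_atMost
    by (rule convergent_prod_LIMSEQ[OF convergent_prod_jacobi[OF assms]])
  then show ?thesis by (rule filterlim_sequentially_Suc[THEN iffD1])
qed

definition jtp_term :: "complex \<Rightarrow> complex \<Rightarrow> nat \<Rightarrow> nat \<Rightarrow> complex" where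
  "jtp_term x w N n =
     (if n \<le> N then x ^ (n*n) * w ^ n * qbinomial (x^2) (2*N) (N+n) else 0)
   + (if n < N then x ^ (Suc n * Suc n) * (1/w) ^ Suc n * qbinomial (x^2) (2*N) (N - Suc n) else 0)"

lemma suminf_jtp_term:
  assumes "x \<noteq> 0" "w \<noteq> 0"
  shows "(\<Sum>n. jtp_term x w N n) = (\<Prod>k<N. (1 + x ^ (2*k+1) * w) * (1 + x ^ (2*k+1) / w))"
proof -
  have "(\<Sum>n. jtp_term x w N n) = (\<Sum>n<Suc N. jtp_term x w N n)"
    by (rule suminf_finite) (auto simp: jtp_term_def)
  also have "\<dots> = (\<Sum>n\<le>N. x ^ (n*n) * w ^ n * qbinomial (x^2) (2*N) (N+n))
      + (\<Sum>n<N. x ^ (Suc n * Suc n) * (1/w) ^ Suc n * qbinomial (x^2) (2*N) (N - Suc n))"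
    by (simp add: jtp_term_def sum.distrib lessThan_Suc_atMost[symmetric] sum.lessThan_Suc)
  finally show ?thesis
    unfolding jacobi_triple_product_finite[OF assms] .
qed

lemma norm_jtp_term_le:
  assumes "\<And>n k. norm (qbinomial (x^2) n k) \<le> B"
  shows "norm (jtp_term x w N n)
    \<le> B * (norm x ^ (n*n) * norm w ^ n + norm x ^ (Suc n * Suc n) * norm (1/w) ^ Suc n)"
proof -
  have B: "0 \<le> B"
    using norm_ge_zero assms by (rule order_trans)
  have le: "norm (if c then a * qbinomial (x^2) k m else 0) \<le> norm a * B" for c a k m
    using B assms[of k m] by (simp add: norm_mult mult_left_mono)
  have "norm (jtp_term x w N n)
      \<le> norm (x ^ (n*n) * w ^ n) * B + norm (x ^ (Suc n * Suc n) * (1/w) ^ Suc n) * B"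
    unfolding jtp_term_def by (rule order_trans[OF norm_triangle_ineq add_mono[OF le le]])
  then show ?thesis
    by (simp only: norm_mult norm_power algebra_simps)
qed

lemma jtp_term_tendsto:
  assumes "norm x < 1"
  shows "(\<lambda>N. jtp_term x w N n)
    \<longlonglongrightarrow> (x ^ (n*n) * w ^ n + x ^ (Suc n * Suc n) * (1/w) ^ Suc n) / qpochhammer_inf (x^2)"
proof -
  have Q: "norm (x^2) < 1"
    using assms by (simp add: norm_power abs_square_less_1)
  have "(\<lambda>N. qbinomial (x^2) (2*N) (N+n)) \<longlonglongrightarrow> 1 / qpochhammer_inf (x^2)"
    by (rule qbinomial_tendsto[OF Q filterlim_add_const_nat_at_top
          filterlim_at_top_mono[OF filterlim_minus_const_nat_at_top[of n]]])
       (auto intro: always_eventually)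
  moreover have "(\<lambda>N. qbinomial (x^2) (2*N) (N - Suc n)) \<longlonglongrightarrow> 1 / qpochhammer_inf (x^2)"
    by (rule qbinomial_tendsto[OF Q filterlim_minus_const_nat_at_top
          filterlim_at_top_mono[OF filterlim_ident]])
       (auto intro: always_eventually)
  ultimately have "(\<lambda>N. x ^ (n*n) * w ^ n * qbinomial (x^2) (2*N) (N+n)
      + x ^ (Suc n * Suc n) * (1/w) ^ Suc n * qbinomial (x^2) (2*N) (N - Suc n))
    \<longlonglongrightarrow> x ^ (n*n) * w ^ n * (1 / qpochhammer_inf (x^2))
      + x ^ (Suc n * Suc n) * (1/w) ^ Suc n * (1 / qpochhammer_inf (x^2))"
    by (intro tendsto_intros)
  moreover have "eventually (\<lambda>N. x ^ (n*n) * w ^ n * qbinomial (x^2) (2*N) (N+n)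
      + x ^ (Suc n * Suc n) * (1/w) ^ Suc n * qbinomial (x^2) (2*N) (N - Suc n) = jtp_term x w N n) sequentially"
    unfolding jtp_term_def using eventually_ge_at_top[of "Suc n"] by eventually_elim auto
  ultimately show ?thesis
    by (auto simp: add_divide_distrib elim: Lim_transform_eventually)
qed

text \<open>The finite products are expanded by \<open>jacobi_triple_product_finite\<close>, whose Gaussian
  binomial coefficients are uniformly bounded and converge to \<open>1 / qpochhammer_inf (x^2)\<close>;
  Tannery's theorem passes to the limit termwise.\<close>

theorem jacobi_triple_product:
  fixes x w :: complex
  assumes x0: "x \<noteq> 0" and x1: "norm x < 1" and w0: "w \<noteq> 0"
  shows "(\<lambda>n. x ^ (n*n) * w ^ n + x ^ (Suc n * Suc n) * (1/w) ^ Suc n)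
           sums (qpochhammer_inf (x^2) * jacobi_prod x w)"
proof -
  have Q: "norm (x^2) < 1"
    using x1 by (simp add: norm_power abs_square_less_1)
  obtain B where "\<And>n k. norm (qbinomial (x^2) n k) \<le> B"
    using qbinomial_bounded[OF Q] by blast
  note bound = norm_jtp_term_le[OF this]
  define M where "M n = B * (norm x ^ (n*n) * norm w ^ n + norm x ^ (Suc n * Suc n) * norm (1/w) ^ Suc n)" for n
  have summable_M: "summable M"
    unfolding M_def using x1
    by (intro summable_mult summable_add summable_power_square summable_power_square_Suc) auto
  define b where "b n = (x ^ (n*n) * w ^ n + x ^ (Suc n * Suc n) * (1/w) ^ Suc n) / qpochhammer_inf (x^2)" for n
  have "eventually (\<lambda>N. summable (\<lambda>n. norm (jtp_term x w N n))) sequentially \<and>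
      summable (\<lambda>n. norm (b n)) \<and> (\<lambda>N. \<Sum>n. jtp_term x w N n) \<longlonglongrightarrow> suminf b"
  proof (rule tannerys_theorem[OF _ _ summable_M])
    show "(\<lambda>N. jtp_term x w N n) \<longlonglongrightarrow> b n" for n
      unfolding b_def by (rule jtp_term_tendsto[OF x1])
    show "eventually (\<lambda>(n, N). norm (jtp_term x w N n) \<le> M n) (sequentially \<times>\<^sub>F sequentially)"
      unfolding M_def by (intro always_eventually) (clarify, rule bound)
  qed simp
  then have "summable b" and "suminf b = jacobi_prod x w"
    using LIMSEQ_unique[OF _ jacobi_prod_tendsto[OF x1]] summable_norm_cancel
    unfolding suminf_jtp_term[OF x0 w0] by blast+
  then have "b sums jacobi_prod x w"
    using summable_sums by metis
  from sums_mult[OF this, of "qpochhammer_inf (x^2)"] show ?thesis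
    using qpochhammer_inf_nonzero[OF Q] by (simp add: b_def)
qed

lemma has_sum_int_split:
  fixes g :: "int \<Rightarrow> 'a::banach"
  assumes s1: "summable (\<lambda>n. norm (g (int n)))"
      and s2: "summable (\<lambda>n. norm (g (- int (Suc n))))"
  shows "(g has_sum (\<Sum>n. g (int n) + g (- int (Suc n)))) UNIV"
proof -
  have h1: "((g \<circ> int) has_sum (\<Sum>n. g (int n))) UNIV"
    unfolding o_def by (rule norm_summable_imp_has_sum[OF s1 summable_sums[OF summable_norm_cancel[OF s1]]])
  have h2: "((g \<circ> (\<lambda>n. - int (Suc n))) has_sum (\<Sum>n. g (- int (Suc n)))) UNIV"
    unfolding o_def by (rule norm_summable_imp_has_sum[OF s2 summable_sums[OF summable_norm_cancel[OF s2]]])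
  have A: "(g has_sum (\<Sum>n. g (int n))) (range int)"
    using has_sum_reindex[of int UNIV g] h1 by simp
  have inj2: "inj (\<lambda>n. - int (Suc n))" by (auto simp: inj_def)
  have B: "(g has_sum (\<Sum>n. g (- int (Suc n)))) (range (\<lambda>n. - int (Suc n)))"
    using has_sum_reindex[OF inj2, of g] h2 by simp
  have "k \<in> range int \<union> range (\<lambda>n. - int (Suc n))" for k :: int
    by (cases k rule: int_cases) auto
  then have U: "range int \<union> range (\<lambda>n. - int (Suc n)) = UNIV"
    by blast
  have D: "range int \<inter> range (\<lambda>n. - int (Suc n)) = {}" by auto
  have "(g has_sum ((\<Sum>n. g (int n)) + (\<Sum>n. g (- int (Suc n))))) UNIV"
    using has_sum_Un_disjoint[OF A B D] U by simp
  moreover have "(\<Sum>n. g (int n)) + (\<Sum>n. g (- int (Suc n))) = (\<Sum>n. g (int n) + g (- int (Suc n)))"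
    by (rule suminf_add) (use s1 s2 summable_norm_cancel in auto)
  ultimately show ?thesis by simp
qed

lemma infsum_int_shift: "infsum (\<lambda>n::int. f (n + k)) UNIV = infsum f UNIV"
  by (rule infsum_reindex_bij_betw) (rule bij_betw_byWitness[where f'="\<lambda>n. n - k"], auto)

lemma infsum_int_uminus: "infsum (\<lambda>n::int. f (- n)) UNIV = infsum f UNIV"
  by (rule infsum_reindex_bij_betw) (rule bij_betw_byWitness[where f'=uminus], auto)

lemma holomorphic_on_suminf:
  fixes f :: "nat \<Rightarrow> complex \<Rightarrow> complex"
  assumes hol: "\<And>n. f n holomorphic_on UNIV"
      and bnd: "\<And>R. \<exists>M. summable M \<and> (\<forall>n z. norm z \<le> R \<longrightarrow> norm (f n z) \<le> M n)"
  shows "(\<lambda>z. \<Sum>n. f n z) holomorphic_on UNIV"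
proof (rule holomorphic_uniform_sequence[where f="\<lambda>N z. \<Sum>n<N. f n z"])
  show "(\<lambda>z. \<Sum>n<N. f n z) holomorphic_on UNIV" for N
    by (intro holomorphic_on_sum) (use hol in auto)
next
  fix x :: complex
  obtain M where M: "summable M" "\<And>n z. norm z \<le> norm x + 1 \<Longrightarrow> norm (f n z) \<le> M n"
    using bnd[of "norm x + 1"] by blast
  have "norm z \<le> norm x + 1" if "z \<in> cball x 1" for z
    using norm_triangle_sub[of z x] that by (simp add: dist_norm norm_minus_commute)
  then have "uniform_limit (cball x 1) (\<lambda>N z. \<Sum>n<N. f n z) (\<lambda>z. \<Sum>n. f n z) sequentially"
    using M by (intro Weierstrass_m_test) auto
  then show "\<exists>d>0. cball x d \<subseteq> UNIV \<and>
      uniform_limit (cball x d) (\<lambda>N z. \<Sum>n<N. f n z) (\<lambda>z. \<Sum>n. f n z) sequentially"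
    by (intro exI[of _ 1]) auto
qed auto

lemma uniform_limit_prodinf:
  fixes f :: "nat \<Rightarrow> complex \<Rightarrow> complex"
  assumes cont: "\<And>n. continuous_on A (f n)" and "compact A"
    and M: "summable M" "\<And>n z. z \<in> A \<Longrightarrow> norm (f n z) \<le> M n"
  shows "uniform_limit A (\<lambda>N z. \<Prod>n<N. 1 + f n z) (\<lambda>z. \<Prod>n. 1 + f n z) sequentially"
proof -
  have "uniformly_convergent_on A (\<lambda>N z. \<Prod>n<N. 1 + f n z)"
    by (rule uniformly_convergent_on_prod[OF cont \<open>compact A\<close> Weierstrass_m_test'[OF _ M(1)]])
       (use M(2) in auto)
  then obtain g where g: "uniform_limit A (\<lambda>N z. \<Prod>n<N. 1 + f n z) g sequentially"
    by (auto simp: uniformly_convergent_on_def)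
  have "g z = (\<Prod>n. 1 + f n z)" if "z \<in> A" for z
  proof -
    have "convergent_prod (\<lambda>n. 1 + f n z)"
      by (rule convergent_prod_1_plus_summable, rule summable_comparison_test[OF _ M(1)])
         (use M(2) that in auto)
    then have "(\<lambda>N. \<Prod>n<Suc N. 1 + f n z) \<longlonglongrightarrow> (\<Prod>n. 1 + f n z)"
      unfolding lessThan_Suc_atMost by (rule convergent_prod_LIMSEQ)
    moreover have "(\<lambda>N. \<Prod>n<Suc N. 1 + f n z) \<longlonglongrightarrow> g z"
      using tendsto_uniform_limitI[OF g that] by (rule filterlim_sequentially_Suc[THEN iffD2])
    ultimately show ?thesis
      by (rule LIMSEQ_unique[rotated])
  qed
  with g show ?thesis
    using uniform_limit_cong'[of A "\<lambda>N z. \<Prod>n<N. 1 + f n z" "\<lambda>N z. \<Prod>n<N. 1 + f n z"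
        g "\<lambda>z. \<Prod>n. 1 + f n z" sequentially] by blast
qed

lemma holomorphic_on_prodinf:
  fixes f :: "nat \<Rightarrow> complex \<Rightarrow> complex"
  assumes hol: "\<And>n. f n holomorphic_on UNIV"
      and bnd: "\<And>R. \<exists>M. summable M \<and> (\<forall>n z. norm z \<le> R \<longrightarrow> norm (f n z) \<le> M n)"
  shows "(\<lambda>z. \<Prod>n. 1 + f n z) holomorphic_on UNIV"
proof (rule holomorphic_uniform_sequence[where f="\<lambda>N z. \<Prod>n<N. 1 + f n z"])
  show "(\<lambda>z. \<Prod>n<N. 1 + f n z) holomorphic_on UNIV" for N
    by (intro holomorphic_on_prod holomorphic_on_add holomorphic_on_const) (use hol in auto)
next
  fix x :: complex
  obtain M where M: "summable M" "\<And>n z. norm z \<le> norm x + 1 \<Longrightarrow> norm (f n z) \<le> M n"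
    using bnd[of "norm x + 1"] by blast
  have "norm z \<le> norm x + 1" if "z \<in> cball x 1" for z
    using norm_triangle_sub[of z x] that by (simp add: dist_norm norm_minus_commute)
  then have "uniform_limit (cball x 1) (\<lambda>N z. \<Prod>n<N. 1 + f n z) (\<lambda>z. \<Prod>n. 1 + f n z) sequentially"
    using hol M by (intro uniform_limit_prodinf holomorphic_on_imp_continuous_on)
      (auto intro: holomorphic_on_subset)
  then show "\<exists>d>0. cball x d \<subseteq> UNIV \<and>
      uniform_limit (cball x d) (\<lambda>N z. \<Prod>n<N. 1 + f n z) (\<lambda>z. \<Prod>n. 1 + f n z) sequentially"
    by (intro exI[of _ 1]) auto
qed auto

lemma periodic_of_int_mult:
  fixes h :: "complex \<Rightarrow> 'b"
  assumes "\<And>z. h (z + a) = h z"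
  shows "h (z + of_int k * a) = h z"
proof -
  have P: "h (z + of_nat n * a) = h z" for n z
  proof (induction n)
    case (Suc n)
    have "h (z + of_nat (Suc n) * a) = h ((z + of_nat n * a) + a)" by (simp add: algebra_simps)
    also have "\<dots> = h (z + of_nat n * a)" by (rule assms)
    finally show ?case using Suc by simp
  qed simp
  show ?thesis
  proof (cases "k \<ge> 0")
    case True
    then have "of_int k = (of_nat (nat k) :: complex)" by simp
    then show ?thesis using P by simp
  next
    case False
    then have k: "of_int k = - (of_nat (nat (- k)) :: complex)" by simp
    have "h ((z + of_int k * a) + of_nat (nat (- k)) * a) = h (z + of_int k * a)" by (rule P)
    then show ?thesis unfolding k by (simp add: algebra_simps)
  qed
qed

lemma lattice_periodic:
  fixes h :: "complex \<Rightarrow> 'b"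
  assumes "\<And>z. h (z + 1) = h z" "\<And>z. h (z + \<sigma>) = h z"
  shows "h (z + of_int m + of_int n * \<sigma>) = h z"
proof -
  have "h ((z + of_int m) + of_int n * \<sigma>) = h (z + of_int m * 1)"
    using periodic_of_int_mult[of h \<sigma>] assms(2) by simp
  also have "\<dots> = h z"
    using periodic_of_int_mult[of h 1] assms(1) by simp
  finally show ?thesis .
qed

lemma lattice_quasi_periodic_eq_0_iff:
  fixes g :: "complex \<Rightarrow> complex"
  assumes "\<And>z. g (z + 1) = g z" "\<And>z. g (z + \<sigma>) = e z * g z" "\<And>z. e z \<noteq> 0"
  shows "g (z + of_int m + of_int n * \<sigma>) = 0 \<longleftrightarrow> g z = 0"
  using lattice_periodic[of "\<lambda>z. g z = 0" \<sigma>] assms by simp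

lemma norm_lattice_point_ge:
  fixes \<sigma> :: complex
  assumes "Im \<sigma> > 0" "a \<noteq> 0 \<or> b \<noteq> 0"
  shows "norm (of_int a + of_int b * \<sigma>) \<ge> min 1 (Im \<sigma>)"
proof (cases "b = 0")
  case True
  then show ?thesis using assms by simp
next
  case False
  then have "Im \<sigma> \<le> \<bar>of_int b\<bar> * Im \<sigma>"
    using assms by (simp add: mult_right_mono)
  also have "\<dots> = \<bar>Im (of_int a + of_int b * \<sigma>)\<bar>"
    using assms by (simp add: abs_mult)
  also have "\<dots> \<le> norm (of_int a + of_int b * \<sigma>)"
    by (rule abs_Im_le_cmod)
  finally show ?thesis by simp
qed

lemma bounded_range_lattice_periodic:
  fixes h :: "complex \<Rightarrow> complex"
  assumes "Im \<sigma> > 0" and "continuous_on UNIV h"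
    and "\<And>z. h (z + 1) = h z" "\<And>z. h (z + \<sigma>) = h z"
  shows "bounded (range h)"
proof -
  define g where "g = (\<lambda>ab::real \<times> real. of_real (fst ab) + of_real (snd ab) * \<sigma>)"
  define K where "K = g ` ({0..1} \<times> {0..1})"
  have "compact K"
    unfolding K_def g_def by (intro compact_continuous_image continuous_intros compact_Times) auto
  then have "bounded (h ` K)"
    by (intro compact_imp_bounded compact_continuous_image continuous_on_subset[OF assms(2)]) auto
  moreover have "range h \<subseteq> h ` K"
  proof clarify
    fix z
    define b where "b = Im z / Im \<sigma>"
    define a where "a = Re z - b * Re \<sigma>"
    have "z = g (frac a, frac b) + of_int \<lfloor>a\<rfloor> + of_int \<lfloor>b\<rfloor> * \<sigma>"
      using assms(1) by (simp add: complex_eq_iff a_def b_def g_def frac_def algebra_simps)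
    then have "h z = h (g (frac a, frac b))"
      using lattice_periodic[of h \<sigma>] assms(3,4) by metis
    moreover have "(frac a, frac b) \<in> {0..1} \<times> {0..1}"
      by (simp add: frac_ge_0 less_imp_le[OF frac_lt_1])
    ultimately show "h z \<in> h ` K"
      unfolding K_def by blast
  qed
  ultimately show ?thesis
    using bounded_subset by blast
qed

section \<open>Jacobi's theta function\<close>

definition theta_term :: "complex \<Rightarrow> complex \<Rightarrow> int \<Rightarrow> complex" where
  "theta_term \<sigma> z n = exp (of_real pi * \<i> * (of_int n)^2 * \<sigma> + 2 * of_real pi * \<i> * of_int n * z)"

definition theta :: "complex \<Rightarrow> complex \<Rightarrow> complex" where
  "theta \<sigma> z = infsum (theta_term \<sigma> z) UNIV"

definition nome :: "complex \<Rightarrow> complex" where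
  "nome \<sigma> = exp (of_real pi * \<i> * \<sigma>)"

definition e2pi :: "complex \<Rightarrow> complex" where
  "e2pi z = exp (2 * of_real pi * \<i> * z)"

lemma theta_term_nat: "theta_term \<sigma> z (int n) = nome \<sigma> ^ (n*n) * e2pi z ^ n"
proof -
  have "of_real pi * \<i> * (of_int (int n))^2 * \<sigma> + 2 * of_real pi * \<i> * of_int (int n) * z
      = of_nat (n*n) * (of_real pi * \<i> * \<sigma>) + of_nat n * (2 * of_real pi * \<i> * z)"
    by (simp add: power2_eq_square mult_ac)
  then show ?thesis
    unfolding theta_term_def nome_def e2pi_def by (simp only: exp_add exp_of_nat_mult)
qed

lemma theta_term_neg:
  "theta_term \<sigma> z (- int (Suc n)) = nome \<sigma> ^ (Suc n * Suc n) * (1 / e2pi z) ^ Suc n"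
proof -
  have "of_real pi * \<i> * (of_int (- int (Suc n)))^2 * \<sigma> = of_nat (Suc n * Suc n) * (of_real pi * \<i> * \<sigma>)"
    by (simp only: of_int_minus minus_mult_minus of_int_of_nat_eq power2_eq_square of_nat_mult mult_ac)
  moreover have "2 * of_real pi * \<i> * of_int (- int (Suc n)) * z = of_nat (Suc n) * (- (2 * of_real pi * \<i> * z))"
    by (simp only: of_int_minus of_int_of_nat_eq mult_ac mult_minus_left mult_minus_right)
  moreover have "exp (- (2 * of_real pi * \<i> * z)) = 1 / e2pi z"
    by (simp add: e2pi_def exp_minus inverse_eq_divide)
  ultimately show ?thesis
    unfolding theta_term_def nome_def by (simp only: exp_add exp_of_nat_mult)
qed

lemma norm_nome: "norm (nome \<sigma>) = exp (- pi * Im \<sigma>)"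
  by (simp add: nome_def norm_exp_eq_Re)

lemma norm_e2pi: "norm (e2pi z) = exp (- 2 * pi * Im z)"
  by (simp add: e2pi_def norm_exp_eq_Re)

lemma norm_nome_less_1: "Im \<sigma> > 0 \<Longrightarrow> norm (nome \<sigma>) < 1"
  by (simp add: norm_nome)

lemma nome_nonzero: "nome \<sigma> \<noteq> 0"
  by (simp add: nome_def)

lemma e2pi_nonzero: "e2pi z \<noteq> 0"
  by (simp add: e2pi_def)

lemma norm_e2pi_le:
  assumes "norm z \<le> R"
  shows "norm (e2pi z) \<le> exp (2 * pi * R)" "norm (1 / e2pi z) \<le> exp (2 * pi * R)"
proof -
  have "- Im z \<le> R" "Im z \<le> R" using abs_Im_le_cmod[of z] assms by auto
  then have "pi * (- Im z) \<le> pi * R" "pi * Im z \<le> pi * R"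
    by (simp_all only: mult_left_mono pi_ge_zero)
  then show "norm (e2pi z) \<le> exp (2 * pi * R)" "norm (1 / e2pi z) \<le> exp (2 * pi * R)"
    unfolding norm_divide norm_e2pi
    by (simp_all add: exp_minus[symmetric] inverse_eq_divide[symmetric] mult.commute)
qed

lemma norm_theta_term_pair_le:
  "norm (theta_term \<sigma> z (int n) + theta_term \<sigma> z (- int (Suc n)))
     \<le> norm (nome \<sigma>) ^ (n*n) * norm (e2pi z) ^ n
       + norm (nome \<sigma>) ^ (Suc n * Suc n) * norm (1 / e2pi z) ^ Suc n"
  using norm_triangle_ineq[of "theta_term \<sigma> z (int n)" "theta_term \<sigma> z (- int (Suc n))"]
  by (simp only: theta_term_nat theta_term_neg norm_mult norm_power)

lemma summable_theta_term:
  assumes "Im \<sigma> > 0"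
  shows "summable (\<lambda>n. norm (theta_term \<sigma> z (int n)))"
    and "summable (\<lambda>n. norm (theta_term \<sigma> z (- int (Suc n))))"
  using summable_power_square[of "norm (nome \<sigma>)" "norm (e2pi z)"]
    summable_power_square_Suc[of "norm (nome \<sigma>)" "norm (1 / e2pi z)"] norm_nome_less_1[OF assms]
  by (simp_all only: theta_term_nat theta_term_neg norm_mult norm_power norm_ge_zero)

lemma theta_has_sum:
  assumes "Im \<sigma> > 0"
  shows "(theta_term \<sigma> z has_sum (\<Sum>n. theta_term \<sigma> z (int n) + theta_term \<sigma> z (- int (Suc n)))) UNIV"
  by (rule has_sum_int_split[OF summable_theta_term[OF assms]])

lemma theta_term_summable_on: "Im \<sigma> > 0 \<Longrightarrow> theta_term \<sigma> z summable_on UNIV"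
  using theta_has_sum unfolding summable_on_def by blast

lemma theta_eq_suminf:
  "Im \<sigma> > 0 \<Longrightarrow> theta \<sigma> z = (\<Sum>n. theta_term \<sigma> z (int n) + theta_term \<sigma> z (- int (Suc n)))"
  unfolding theta_def by (rule infsumI[OF theta_has_sum])

lemma theta_sums:
  assumes "Im \<sigma> > 0"
  shows "(\<lambda>n. theta_term \<sigma> z (int n) + theta_term \<sigma> z (- int (Suc n))) sums theta \<sigma> z"
  unfolding theta_eq_suminf[OF assms] using summable_theta_term[OF assms]
  by (intro summable_sums summable_add) (simp_all add: summable_norm_cancel)

lemma theta_product:
  assumes "Im \<sigma> > 0"
  shows "theta \<sigma> z = qpochhammer_inf (nome \<sigma> ^ 2) * jacobi_prod (nome \<sigma>) (e2pi z)"
  using theta_sums[OF assms, of z] jacobi_triple_product[OF nome_nonzero norm_nome_less_1[OF assms] e2pi_nonzero]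
  unfolding theta_term_nat theta_term_neg by (rule sums_unique2)

lemma exp_2pi_i_of_int: "exp (2 * of_real pi * \<i> * of_int n) = 1"
  using exp_integer_2pi[of "of_int n"] by (simp add: mult_ac)

lemma theta_plus_1: "theta \<sigma> (z + 1) = theta \<sigma> z"
proof -
  have "theta_term \<sigma> (z + 1) n = theta_term \<sigma> z n" for n
  proof -
    have "of_real pi * \<i> * (of_int n)^2 * \<sigma> + 2 * of_real pi * \<i> * of_int n * (z + 1)
        = (of_real pi * \<i> * (of_int n)^2 * \<sigma> + 2 * of_real pi * \<i> * of_int n * z)
          + 2 * of_real pi * \<i> * of_int n"
      by (simp add: algebra_simps)
    then show ?thesis
      unfolding theta_term_def by (simp only: exp_add exp_2pi_i_of_int mult_1_right)
  qed
  then have "theta_term \<sigma> (z + 1) = theta_term \<sigma> z" ..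
  then show ?thesis unfolding theta_def by simp
qed

lemma theta_plus_period:
  "theta \<sigma> (z + \<sigma>) = exp (- of_real pi * \<i> * \<sigma> - 2 * of_real pi * \<i> * z) * theta \<sigma> z"
proof -
  define c where "c = exp (- of_real pi * \<i> * \<sigma> - 2 * of_real pi * \<i> * z)"
  have "theta_term \<sigma> (z + \<sigma>) n = c * theta_term \<sigma> z (n + 1)" for n
  proof -
    have "of_real pi * \<i> * (of_int n)^2 * \<sigma> + 2 * of_real pi * \<i> * of_int n * (z + \<sigma>)
        = (- of_real pi * \<i> * \<sigma> - 2 * of_real pi * \<i> * z) +
          (of_real pi * \<i> * (of_int (n+1))^2 * \<sigma> + 2 * of_real pi * \<i> * of_int (n+1) * z)"
      by (simp add: algebra_simps power2_eq_square)
    then show ?thesis unfolding theta_term_def c_def by (simp only: exp_add)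
  qed
  then have "theta_term \<sigma> (z + \<sigma>) = (\<lambda>n. c * theta_term \<sigma> z (n + 1))" ..
  then have "theta \<sigma> (z + \<sigma>) = infsum (\<lambda>n. c * theta_term \<sigma> z (n + 1)) UNIV"
    unfolding theta_def by simp
  also have "\<dots> = c * infsum (\<lambda>n. theta_term \<sigma> z (n + 1)) UNIV"
    by (rule infsum_cmult_right')
  also have "infsum (\<lambda>n. theta_term \<sigma> z (n + 1)) UNIV = theta \<sigma> z"
    unfolding theta_def by (rule infsum_int_shift)
  finally show ?thesis by (simp add: c_def)
qed

lemma theta_minus_period:
  "theta \<sigma> (z - \<sigma>) = exp (2 * of_real pi * \<i> * z - of_real pi * \<i> * \<sigma>) * theta \<sigma> z"
proof -
  have "theta \<sigma> z = exp (- (2 * of_real pi * \<i> * z - of_real pi * \<i> * \<sigma>)) * theta \<sigma> (z - \<sigma>)"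
    using theta_plus_period[of \<sigma> "z - \<sigma>"] by (simp add: algebra_simps)
  moreover have "exp (2 * of_real pi * \<i> * z - of_real pi * \<i> * \<sigma>)
      * exp (of_real pi * \<i> * \<sigma> - 2 * of_real pi * \<i> * z) = 1"
    by (simp flip: exp_add)
  ultimately show ?thesis
    by simp
qed

lemma theta_minus: "theta \<sigma> (- z) = theta \<sigma> z"
proof -
  have "theta_term \<sigma> (- z) = (\<lambda>n. theta_term \<sigma> z (- n))"
    unfolding theta_term_def by (simp add: power2_eq_square)
  then show ?thesis
    unfolding theta_def by (simp add: infsum_int_uminus)
qed

lemma holomorphic_theta:
  assumes "Im \<sigma> > 0"
  shows "theta \<sigma> holomorphic_on UNIV"
proof -
  have "(\<lambda>z. \<Sum>n. theta_term \<sigma> z (int n) + theta_term \<sigma> z (- int (Suc n))) holomorphic_on UNIV"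
  proof (rule holomorphic_on_suminf)
    show "(\<lambda>z. theta_term \<sigma> z (int n) + theta_term \<sigma> z (- int (Suc n))) holomorphic_on UNIV" for n
      unfolding theta_term_def by (intro holomorphic_intros)
  next
    fix R :: real
    define r c where "r = norm (nome \<sigma>)" and "c = exp (2 * pi * R)"
    have "norm (theta_term \<sigma> z (int n) + theta_term \<sigma> z (- int (Suc n)))
        \<le> r ^ (n*n) * c ^ n + r ^ (Suc n * Suc n) * c ^ Suc n" if "norm z \<le> R" for n z
      using norm_e2pi_le[OF that] unfolding r_def c_def
      by (intro order_trans[OF norm_theta_term_pair_le] add_mono mult_left_mono power_mono) simp_all
    moreover have "summable (\<lambda>n. r ^ (n*n) * c ^ n + r ^ (Suc n * Suc n) * c ^ Suc n)"
      using norm_nome_less_1[OF assms]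
      by (intro summable_add summable_power_square summable_power_square_Suc) (simp_all add: r_def c_def)
    ultimately show "\<exists>M. summable M \<and> (\<forall>n z. norm z \<le> R \<longrightarrow>
        norm (theta_term \<sigma> z (int n) + theta_term \<sigma> z (- int (Suc n))) \<le> M n)"
      by blast
  qed
  then show ?thesis
    by (rule holomorphic_transform) (simp add: theta_eq_suminf[OF assms])
qed

definition theta_zero :: "complex \<Rightarrow> complex" where
  "theta_zero \<sigma> = (1 + \<sigma>) / 2"

definition theta_factor :: "complex \<Rightarrow> complex \<Rightarrow> complex" where
  "theta_factor \<sigma> z = 1 + nome \<sigma> / e2pi z"

definition theta_prod_plus :: "complex \<Rightarrow> complex \<Rightarrow> complex" where
  "theta_prod_plus \<sigma> z = (\<Prod>n. 1 + nome \<sigma> ^ (2*n+1) * e2pi z)"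

definition theta_prod_minus :: "complex \<Rightarrow> complex \<Rightarrow> complex" where
  "theta_prod_minus \<sigma> z = (\<Prod>n. 1 + nome \<sigma> ^ (2*n+3) / e2pi z)"

definition theta_cofactor :: "complex \<Rightarrow> complex \<Rightarrow> complex" where
  "theta_cofactor \<sigma> z = qpochhammer_inf (nome \<sigma> ^ 2) * theta_prod_plus \<sigma> z * theta_prod_minus \<sigma> z"

lemma qpochhammer_inf_nome_nonzero: "Im \<sigma> > 0 \<Longrightarrow> qpochhammer_inf (nome \<sigma> ^ 2) \<noteq> 0"
  by (rule qpochhammer_inf_nonzero) (use norm_nome_less_1 in \<open>simp add: norm_power abs_square_less_1\<close>)

lemma convergent_prod_theta_plus: "Im \<sigma> > 0 \<Longrightarrow> convergent_prod (\<lambda>n. 1 + nome \<sigma> ^ (2*n+1) * e2pi z)"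
  by (rule convergent_prod_odd_powers[OF norm_nome_less_1])

lemma convergent_prod_theta_minus: "Im \<sigma> > 0 \<Longrightarrow> convergent_prod (\<lambda>n. 1 + nome \<sigma> ^ (2*n+1) / e2pi z)"
  using convergent_prod_odd_powers[OF norm_nome_less_1, of \<sigma> "1 / e2pi z"] by simp

text \<open>The first factor of the second product in the Jacobi triple product is split off; it
  alone vanishes at \<open>theta_zero \<sigma>\<close>.\<close>

lemma theta_factorization:
  assumes "Im \<sigma> > 0"
  shows "theta \<sigma> z = theta_factor \<sigma> z * theta_cofactor \<sigma> z"
proof -
  define B where "B n = 1 + nome \<sigma> ^ (2*n+1) / e2pi z" for n
  have B: "convergent_prod B"
    unfolding B_def by (rule convergent_prod_theta_minus[OF assms])
  have "jacobi_prod (nome \<sigma>) (e2pi z) = theta_prod_plus \<sigma> z * prodinf B"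
    unfolding jacobi_prod_def theta_prod_plus_def B_def
    by (rule prodinf_mult[symmetric, OF convergent_prod_theta_plus[OF assms] convergent_prod_theta_minus[OF assms]])
  also have "prodinf B = B 0 * prodinf (\<lambda>n. B (Suc n))"
    using has_prod_unique[OF has_prod_ignore_initial_segment'[OF B, of 1]] by simp
  also have "B 0 = theta_factor \<sigma> z"
    by (simp add: B_def theta_factor_def)
  also have "prodinf (\<lambda>n. B (Suc n)) = theta_prod_minus \<sigma> z"
    unfolding theta_prod_minus_def B_def by (simp add: numeral_3_eq_3 add_ac)
  finally show ?thesis
    using theta_product[OF assms] by (simp add: theta_cofactor_def algebra_simps)
qed

lemma nome_power_mult_e2pi:
  "nome \<sigma> ^ k * e2pi z = exp (of_nat k * (of_real pi * \<i> * \<sigma>) + 2 * of_real pi * \<i> * z)"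
  by (simp add: nome_def e2pi_def exp_add exp_of_nat_mult)

lemma nome_power_div_e2pi:
  "nome \<sigma> ^ k / e2pi z = exp (of_nat k * (of_real pi * \<i> * \<sigma>) - 2 * of_real pi * \<i> * z)"
  by (simp add: nome_def e2pi_def exp_diff exp_of_nat_mult)

lemma exp_eq_minus_1D: "exp a = -1 \<Longrightarrow> \<exists>n::int. a = of_real pi * \<i> + of_int (2*n) * of_real pi * \<i>"
  using exp_eq[of a "of_real pi * \<i>"] by (auto simp: mult_ac)

lemma one_plus_nome_power_mult_e2pi_eq_0D:
  assumes "1 + nome \<sigma> ^ k * e2pi z = 0"
  shows "\<exists>n::int. z = 1/2 + of_int n - of_nat k * \<sigma> / 2"
proof -
  have "exp (of_nat k * (of_real pi * \<i> * \<sigma>) + 2 * of_real pi * \<i> * z) = -1"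
    using assms unfolding nome_power_mult_e2pi by (simp add: add_eq_0_iff)
  then obtain n :: int where "of_nat k * (of_real pi * \<i> * \<sigma>) + 2 * of_real pi * \<i> * z
      = of_real pi * \<i> + of_int (2*n) * of_real pi * \<i>"
    using exp_eq_minus_1D by blast
  then have "2 * of_real pi * \<i> * z = 2 * of_real pi * \<i> * (1/2 + of_int n - of_nat k * \<sigma> / 2)"
    by (simp add: algebra_simps)
  then show ?thesis by auto
qed

lemma one_plus_nome_power_div_e2pi_eq_0D:
  assumes "1 + nome \<sigma> ^ k / e2pi z = 0"
  shows "\<exists>n::int. z = - 1/2 - of_int n + of_nat k * \<sigma> / 2"
proof -
  have "exp (of_nat k * (of_real pi * \<i> * \<sigma>) - 2 * of_real pi * \<i> * z) = -1"
    using assms unfolding nome_power_div_e2pi by (simp add: add_eq_0_iff)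
  then obtain n :: int where "of_nat k * (of_real pi * \<i> * \<sigma>) - 2 * of_real pi * \<i> * z
      = of_real pi * \<i> + of_int (2*n) * of_real pi * \<i>"
    using exp_eq_minus_1D by blast
  then have "2 * of_real pi * \<i> * z = 2 * of_real pi * \<i> * (- 1/2 - of_int n + of_nat k * \<sigma> / 2)"
    by (simp add: algebra_simps)
  then show ?thesis by auto
qed

lemma prodinf_eq_0D: "convergent_prod f \<Longrightarrow> prodinf f = (0::complex) \<Longrightarrow> \<exists>n. f n = 0"
  using prodinf_nonzero by blast

lemma theta_factor_eq_0D:
  assumes "theta_factor \<sigma> z = 0"
  shows "\<exists>m n::int. z = theta_zero \<sigma> + of_int m + of_int n * \<sigma>"
proof -
  obtain n :: int where "z = - 1/2 - of_int n + of_nat 1 * \<sigma> / 2"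
    using one_plus_nome_power_div_e2pi_eq_0D[of \<sigma> 1 z] assms by (auto simp: theta_factor_def)
  moreover have "- 1/2 - of_int n + of_nat 1 * \<sigma> / 2 = theta_zero \<sigma> + of_int (- n - 1) + of_int 0 * \<sigma>"
    by (simp add: theta_zero_def field_simps)
  ultimately show ?thesis by (blast dest: trans)
qed

lemma theta_prod_plus_eq_0D:
  assumes "Im \<sigma> > 0" and "theta_prod_plus \<sigma> z = 0"
  shows "\<exists>m n::int. z = theta_zero \<sigma> + of_int m + of_int n * \<sigma>"
proof -
  obtain j where "1 + nome \<sigma> ^ (2*j+1) * e2pi z = 0"
    using prodinf_eq_0D[OF convergent_prod_theta_plus[OF assms(1)]] assms(2)
    unfolding theta_prod_plus_def by blast
  then obtain n :: int where "z = 1/2 + of_int n - of_nat (2*j+1) * \<sigma> / 2"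
    using one_plus_nome_power_mult_e2pi_eq_0D by blast
  moreover have "1/2 + of_int n - of_nat (2*j+1) * \<sigma> / 2
      = theta_zero \<sigma> + of_int n + of_int (- int j - 1) * \<sigma>"
    by (simp add: theta_zero_def field_simps)
  ultimately show ?thesis by (blast dest: trans)
qed

lemma theta_prod_minus_eq_0D:
  assumes "Im \<sigma> > 0" and "theta_prod_minus \<sigma> z = 0"
  shows "\<exists>m n::int. z = theta_zero \<sigma> + of_int m + of_int n * \<sigma>"
proof -
  have "2 * (n + 1) + 1 = 2*n+3" for n :: nat
    by simp
  then have "convergent_prod (\<lambda>n. 1 + nome \<sigma> ^ (2*n+3) / e2pi z)"
    using convergent_prod_theta_minus[OF assms(1), of z]
      convergent_prod_iff_shift[of "\<lambda>n. 1 + nome \<sigma> ^ (2*n+1) / e2pi z" 1]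
    by (simp only:)
  then obtain j where "1 + nome \<sigma> ^ (2*j+3) / e2pi z = 0"
    using prodinf_eq_0D assms(2) unfolding theta_prod_minus_def by blast
  then obtain n :: int where "z = - 1/2 - of_int n + of_nat (2*j+3) * \<sigma> / 2"
    using one_plus_nome_power_div_e2pi_eq_0D by blast
  moreover have "- 1/2 - of_int n + of_nat (2*j+3) * \<sigma> / 2
      = theta_zero \<sigma> + of_int (- n - 1) + of_int (int j + 1) * \<sigma>"
    by (simp add: theta_zero_def field_simps)
  ultimately show ?thesis by (blast dest: trans)
qed

lemma theta_eq_0D:
  assumes "Im \<sigma> > 0" and "theta \<sigma> z = 0"
  shows "\<exists>m n::int. z = theta_zero \<sigma> + of_int m + of_int n * \<sigma>"
  using assms theta_factorization[OF assms(1), of z] qpochhammer_inf_nome_nonzero[OF assms(1)]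
    theta_factor_eq_0D theta_prod_plus_eq_0D theta_prod_minus_eq_0D
  by (auto simp: theta_cofactor_def)

lemma holomorphic_theta_prod_plus:
  assumes "Im \<sigma> > 0"
  shows "theta_prod_plus \<sigma> holomorphic_on UNIV"
  unfolding theta_prod_plus_def[abs_def]
proof (rule holomorphic_on_prodinf)
  show "(\<lambda>z. nome \<sigma> ^ (2*n+1) * e2pi z) holomorphic_on UNIV" for n
    unfolding e2pi_def by (intro holomorphic_intros)
  fix R :: real
  have "norm (nome \<sigma> ^ (2*n+1) * e2pi z) \<le> norm (nome \<sigma>) ^ (2*n+1) * exp (2*pi*R)" if "norm z \<le> R" for n z
    using norm_e2pi_le(1)[OF that] by (simp add: norm_mult norm_power mult_left_mono)
  then show "\<exists>M. summable M \<and> (\<forall>n z. norm z \<le> R \<longrightarrow> norm (nome \<sigma> ^ (2*n+1) * e2pi z) \<le> M n)"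
    using summable_odd_powers[OF norm_nome_less_1[OF assms], of 1 "exp (2*pi*R)"] by blast
qed

lemma holomorphic_theta_prod_minus:
  assumes "Im \<sigma> > 0"
  shows "theta_prod_minus \<sigma> holomorphic_on UNIV"
  unfolding theta_prod_minus_def[abs_def]
proof (rule holomorphic_on_prodinf)
  show "(\<lambda>z. nome \<sigma> ^ (2*n+3) / e2pi z) holomorphic_on UNIV" for n
    unfolding e2pi_def by (intro holomorphic_intros) simp
  fix R :: real
  have "norm (nome \<sigma> ^ (2*n+3) / e2pi z) \<le> norm (nome \<sigma>) ^ (2*n+3) * exp (2*pi*R)" if "norm z \<le> R" for n z
    using mult_left_mono[OF norm_e2pi_le(2)[OF that], of "norm (nome \<sigma>) ^ (2*n+3)"]
    by (simp add: norm_divide norm_power)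
  then show "\<exists>M. summable M \<and> (\<forall>n z. norm z \<le> R \<longrightarrow> norm (nome \<sigma> ^ (2*n+3) / e2pi z) \<le> M n)"
    using summable_odd_powers[OF norm_nome_less_1[OF assms], of 3 "exp (2*pi*R)"] by blast
qed

lemma holomorphic_theta_cofactor: "Im \<sigma> > 0 \<Longrightarrow> theta_cofactor \<sigma> holomorphic_on UNIV"
  unfolding theta_cofactor_def[abs_def]
  by (intro holomorphic_on_mult holomorphic_on_const holomorphic_theta_prod_plus holomorphic_theta_prod_minus)

lemma e2pi_theta_zero: "e2pi (theta_zero \<sigma>) = - nome \<sigma>"
proof -
  have "2 * of_real pi * \<i> * ((1 + \<sigma>) / 2) = of_real pi * \<i> + of_real pi * \<i> * \<sigma>"
    by (simp add: field_simps)
  then show ?thesis by (simp add: e2pi_def nome_def theta_zero_def exp_add)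
qed

lemma theta_factor_theta_zero: "theta_factor \<sigma> (theta_zero \<sigma>) = 0"
  using nome_nonzero[of \<sigma>] by (simp add: theta_factor_def e2pi_theta_zero)

lemma theta_cofactor_theta_zero:
  assumes "Im \<sigma> > 0"
  shows "theta_cofactor \<sigma> (theta_zero \<sigma>) \<noteq> 0"
proof -
  have "1 + nome \<sigma> ^ (2*n+1) * e2pi (theta_zero \<sigma>) = 1 - (nome \<sigma> ^ 2) ^ Suc n" for n
  proof -
    have "2 * Suc n = Suc (2*n+1)"
      by simp
    then have "(nome \<sigma> ^ 2) ^ Suc n = nome \<sigma> ^ Suc (2*n+1)"
      by (simp only: power_mult[symmetric])
    also have "\<dots> = nome \<sigma> ^ (2*n+1) * nome \<sigma>"
      by (rule power_Suc2)
    finally have "(nome \<sigma> ^ 2) ^ Suc n = nome \<sigma> ^ (2*n+1) * nome \<sigma>" .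
    then show ?thesis by (simp add: e2pi_theta_zero)
  qed
  then have "theta_prod_plus \<sigma> (theta_zero \<sigma>) = qpochhammer_inf (nome \<sigma> ^ 2)"
    unfolding theta_prod_plus_def qpochhammer_inf_def by simp
  moreover have "1 + nome \<sigma> ^ (2*n+3) / e2pi (theta_zero \<sigma>) = 1 - (nome \<sigma> ^ 2) ^ Suc n" for n
  proof -
    have "2*n+3 = Suc (2 * Suc n)"
      by simp
    then have "nome \<sigma> ^ (2*n+3) = nome \<sigma> * (nome \<sigma> ^ 2) ^ Suc n"
      by (simp only: power_Suc power_mult)
    then show ?thesis using nome_nonzero[of \<sigma>] by (simp add: e2pi_theta_zero)
  qed
  then have "theta_prod_minus \<sigma> (theta_zero \<sigma>) = qpochhammer_inf (nome \<sigma> ^ 2)"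
    unfolding theta_prod_minus_def qpochhammer_inf_def by simp
  ultimately show ?thesis
    using qpochhammer_inf_nome_nonzero[OF assms] by (simp add: theta_cofactor_def)
qed

lemma theta_factor_has_derivative_theta_zero:
  "(theta_factor \<sigma> has_field_derivative 2 * of_real pi * \<i>) (at (theta_zero \<sigma>))"
proof -
  have "((\<lambda>z. 1 + nome \<sigma> * exp (- (2 * of_real pi * \<i> * z))) has_field_derivative
          nome \<sigma> * exp (- (2 * of_real pi * \<i> * theta_zero \<sigma>)) * (- (2 * of_real pi * \<i>)))
        (at (theta_zero \<sigma>))"
    by (rule derivative_eq_intros refl | simp)+
  moreover have "theta_factor \<sigma> = (\<lambda>z. 1 + nome \<sigma> * exp (- (2 * of_real pi * \<i> * z)))"
    by (simp add: theta_factor_def e2pi_def exp_minus divide_inverse fun_eq_iff)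
  moreover have "nome \<sigma> * exp (- (2 * of_real pi * \<i> * theta_zero \<sigma>)) = -1"
    using e2pi_theta_zero[of \<sigma>] nome_nonzero[of \<sigma>]
    by (simp add: e2pi_def exp_minus field_simps)
  ultimately show ?thesis by simp
qed

section \<open>The theta inversion formula\<close>

lemma Im_minus_inverse_pos: "Im \<sigma> > 0 \<Longrightarrow> Im (- 1 / \<sigma>) > 0"
proof -
  assume sp: "Im \<sigma> > 0"
  have "0 < (Re \<sigma>)\<^sup>2 + (Im \<sigma>)\<^sup>2" using sp by (intro add_nonneg_pos) auto
  then show ?thesis using sp by (simp add: Im_divide)
qed

text \<open>Under \<open>z \<mapsto> z/\<sigma>\<close> the quasi-periods \<open>1\<close> and \<open>-1/\<sigma>\<close> of \<open>theta (-1/\<sigma>)\<close>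
  become \<open>\<sigma>\<close> and \<open>1\<close>, and the Gaussian factor corrects the multipliers, so \<open>theta_transform \<sigma>\<close>
  satisfies the same functional equations as \<open>theta \<sigma>\<close>.\<close>

definition theta_transform :: "complex \<Rightarrow> complex \<Rightarrow> complex" where
  "theta_transform \<sigma> z = exp (- (of_real pi * \<i> * z^2 / \<sigma>)) * theta (- 1 / \<sigma>) (z / \<sigma>)"

lemma theta_transform_plus_1:
  assumes s0: "\<sigma> \<noteq> 0"
  shows "theta_transform \<sigma> (z + 1) = theta_transform \<sigma> z"
proof -
  have e1: "(z + 1) / \<sigma> = z / \<sigma> - (- 1 / \<sigma>)" by (simp add: add_divide_distrib add.commute)
  have e2: "- (of_real pi * \<i> * (z + 1)^2 / \<sigma>) + (2 * of_real pi * \<i> * (z / \<sigma>) - of_real pi * \<i> * (- 1 / \<sigma>))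
      = - (of_real pi * \<i> * z^2 / \<sigma>)"
    using s0 by (simp add: field_simps power2_eq_square)
  have "theta_transform \<sigma> (z + 1) = exp (- (of_real pi * \<i> * (z + 1)^2 / \<sigma>)) *
      (exp (2 * of_real pi * \<i> * (z / \<sigma>) - of_real pi * \<i> * (- 1 / \<sigma>)) * theta (- 1 / \<sigma>) (z / \<sigma>))"
    unfolding theta_transform_def e1 theta_minus_period ..
  also have "\<dots> = exp (- (of_real pi * \<i> * (z + 1)^2 / \<sigma>) + (2 * of_real pi * \<i> * (z / \<sigma>) - of_real pi * \<i> * (- 1 / \<sigma>)))
      * theta (- 1 / \<sigma>) (z / \<sigma>)"
    by (simp only: exp_add mult.assoc)
  also have "\<dots> = theta_transform \<sigma> z" unfolding e2 theta_transform_def ..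
  finally show ?thesis .
qed

lemma theta_transform_plus_period:
  assumes s0: "\<sigma> \<noteq> 0"
  shows "theta_transform \<sigma> (z + \<sigma>) = exp (- of_real pi * \<i> * \<sigma> - 2 * of_real pi * \<i> * z) * theta_transform \<sigma> z"
proof -
  have e1: "(z + \<sigma>) / \<sigma> = z / \<sigma> + 1" using s0 by (simp add: field_simps)
  have e2: "- (of_real pi * \<i> * (z + \<sigma>)^2 / \<sigma>) =
      (- of_real pi * \<i> * \<sigma> - 2 * of_real pi * \<i> * z) + - (of_real pi * \<i> * z^2 / \<sigma>)"
    using s0 by (simp add: field_simps power2_eq_square)
  show ?thesis unfolding theta_transform_def e1 theta_plus_1 e2 exp_add by (simp add: mult_ac)
qed

lemma theta_transform_minus: "theta_transform \<sigma> (- z) = theta_transform \<sigma> z"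
proof -
  have "(- z) / \<sigma> = - (z / \<sigma>)" by simp
  then show ?thesis unfolding theta_transform_def by (simp add: theta_minus)
qed

lemma holomorphic_theta_transform:
  assumes sp: "Im \<sigma> > 0"
  shows "theta_transform \<sigma> holomorphic_on UNIV"
proof -
  have h: "(\<lambda>z. theta (- 1 / \<sigma>) z) holomorphic_on UNIV" by (rule holomorphic_theta[OF Im_minus_inverse_pos[OF sp]])
  have s0: "\<sigma> \<noteq> 0" using sp by auto
  have hz: "(\<lambda>z. z / \<sigma>) holomorphic_on UNIV" using s0 by (intro holomorphic_intros)
  have h2: "(\<lambda>z. theta (- 1 / \<sigma>) z) holomorphic_on ((\<lambda>z. z / \<sigma>) ` UNIV)"
    by (rule holomorphic_on_subset[OF h]) simp
  have "(\<lambda>z. theta (- 1 / \<sigma>) (z / \<sigma>)) holomorphic_on UNIV"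
    using holomorphic_on_compose[OF hz h2] by (simp add: o_def)
  then show ?thesis unfolding theta_transform_def[abs_def] using s0 by (intro holomorphic_intros)
qed

lemma theta_transform_theta_zero:
  assumes s0: "\<sigma> \<noteq> 0"
  shows "theta_transform \<sigma> (theta_zero \<sigma>) = 0"
proof -
  define w where "w = - theta_zero \<sigma> + 1"
  have zz: "theta_zero \<sigma> = w + \<sigma>" by (simp add: w_def theta_zero_def field_simps)
  have ex: "- of_real pi * \<i> * \<sigma> - 2 * of_real pi * \<i> * w = - (of_real pi * \<i>)"
    by (simp add: w_def theta_zero_def field_simps)
  have "theta_transform \<sigma> (theta_zero \<sigma>) = exp (- of_real pi * \<i> * \<sigma> - 2 * of_real pi * \<i> * w) * theta_transform \<sigma> w"
    unfolding zz by (rule theta_transform_plus_period[OF s0])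
  also have "theta_transform \<sigma> w = theta_transform \<sigma> (- theta_zero \<sigma>)" unfolding w_def by (rule theta_transform_plus_1[OF s0])
  also have "\<dots> = theta_transform \<sigma> (theta_zero \<sigma>)" by (rule theta_transform_minus)
  finally have "theta_transform \<sigma> (theta_zero \<sigma>) = - theta_transform \<sigma> (theta_zero \<sigma>)" unfolding ex by (simp add: exp_minus)
  then show ?thesis by simp
qed

definition theta_quotient :: "complex \<Rightarrow> complex \<Rightarrow> complex" where
  "theta_quotient \<sigma> z = theta_transform \<sigma> z / theta \<sigma> z"

context
  fixes \<sigma> :: complex
  assumes sp: "Im \<sigma> > 0"
begin

lemma sigma_nonzero: "\<sigma> \<noteq> 0"
  using sp by auto

lemma theta_lattice_eq_0_iff: "theta \<sigma> (z + of_int m + of_int n * \<sigma>) = 0 \<longleftrightarrow> theta \<sigma> z = 0"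
  by (rule lattice_quasi_periodic_eq_0_iff[where g="theta \<sigma>"
        and e="\<lambda>z. exp (- of_real pi * \<i> * \<sigma> - 2 * of_real pi * \<i> * z)"])
     (simp_all add: theta_plus_1 theta_plus_period)

lemma theta_transform_lattice_eq_0_iff:
  "theta_transform \<sigma> (z + of_int m + of_int n * \<sigma>) = 0 \<longleftrightarrow> theta_transform \<sigma> z = 0"
  by (rule lattice_quasi_periodic_eq_0_iff[where g="theta_transform \<sigma>"
        and e="\<lambda>z. exp (- of_real pi * \<i> * \<sigma> - 2 * of_real pi * \<i> * z)"])
     (simp_all add: theta_transform_plus_1[OF sigma_nonzero] theta_transform_plus_period[OF sigma_nonzero])

lemma theta_eq_0_iff: "theta \<sigma> z = 0 \<longleftrightarrow> (\<exists>m n::int. z = theta_zero \<sigma> + of_int m + of_int n * \<sigma>)"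
proof
  show "theta \<sigma> z = 0 \<Longrightarrow> \<exists>m n::int. z = theta_zero \<sigma> + of_int m + of_int n * \<sigma>"
    by (rule theta_eq_0D[OF sp])
  assume "\<exists>m n::int. z = theta_zero \<sigma> + of_int m + of_int n * \<sigma>"
  then obtain m n :: int where z: "z = theta_zero \<sigma> + of_int m + of_int n * \<sigma>"
    by blast
  show "theta \<sigma> z = 0"
    unfolding z theta_lattice_eq_0_iff by (simp add: theta_factorization[OF sp] theta_factor_theta_zero)
qed

lemma theta_transform_eq_0: "theta \<sigma> z = 0 \<Longrightarrow> theta_transform \<sigma> z = 0"
  using theta_transform_lattice_eq_0_iff theta_transform_theta_zero[OF sigma_nonzero]
  unfolding theta_eq_0_iff by auto

lemma theta_nonzero_near_zero:
  assumes "theta \<sigma> p = 0" "y \<in> ball p (min 1 (Im \<sigma>))" "y \<noteq> p"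
  shows "theta \<sigma> y \<noteq> 0"
proof
  assume "theta \<sigma> y = 0"
  with assms(1) obtain m n m' n' :: int
    where p: "p = theta_zero \<sigma> + of_int m + of_int n * \<sigma>"
      and y: "y = theta_zero \<sigma> + of_int m' + of_int n' * \<sigma>"
    unfolding theta_eq_0_iff by blast
  have "y - p = of_int (m' - m) + of_int (n' - n) * \<sigma>"
    unfolding y p by (simp add: algebra_simps)
  moreover have "m' - m \<noteq> 0 \<or> n' - n \<noteq> 0"
    using assms(3) unfolding y p by auto
  ultimately have "min 1 (Im \<sigma>) \<le> norm (y - p)"
    using norm_lattice_point_ge[OF sp] by metis
  with assms(2) show False
    by (auto simp: dist_norm norm_minus_commute min_le_iff_disj)
qed

definition theta_quotient_lim :: complex where
  "theta_quotient_lim =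
     deriv (theta_transform \<sigma>) (theta_zero \<sigma>) / (2 * of_real pi * \<i>) / theta_cofactor \<sigma> (theta_zero \<sigma>)"

lemma theta_quotient_tendsto_theta_zero:
  "(theta_quotient \<sigma> \<longlongrightarrow> theta_quotient_lim) (at (theta_zero \<sigma>))"
proof -
  have lim: "((\<lambda>z. theta_transform \<sigma> z / theta_factor \<sigma> z)
      \<longlongrightarrow> deriv (theta_transform \<sigma>) (theta_zero \<sigma>) / (2 * of_real pi * \<i>)) (at (theta_zero \<sigma>))"
    by (rule lhopital_complex_simple[OF holomorphic_derivI[OF holomorphic_theta_transform[OF sp]]
          theta_factor_has_derivative_theta_zero theta_transform_theta_zero[OF sigma_nonzero]
          theta_factor_theta_zero]) auto
  have cont: "isCont (theta_cofactor \<sigma>) (theta_zero \<sigma>)"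
    using holomorphic_on_imp_continuous_on[OF holomorphic_theta_cofactor[OF sp]]
    by (simp add: continuous_on_eq_continuous_at)
  have "((\<lambda>z. theta_transform \<sigma> z / theta_factor \<sigma> z / theta_cofactor \<sigma> z)
      \<longlongrightarrow> theta_quotient_lim) (at (theta_zero \<sigma>))"
    unfolding theta_quotient_lim_def
    by (rule tendsto_divide[OF lim isContD[OF cont] theta_cofactor_theta_zero[OF sp]])
  then show ?thesis
    by (simp add: theta_quotient_def[abs_def] theta_factorization[OF sp] divide_divide_eq_left)
qed

lemma theta_quotient_tendsto:
  assumes "theta \<sigma> p = 0"
  shows "(theta_quotient \<sigma> \<longlongrightarrow> theta_quotient_lim) (at p)"
proof -
  obtain m n :: int where p: "p = theta_zero \<sigma> + of_int m + of_int n * \<sigma>"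
    using assms unfolding theta_eq_0_iff by blast
  have periodic: "theta_quotient \<sigma> (z + of_int m + of_int n * \<sigma>) = theta_quotient \<sigma> z" for z
    by (rule lattice_periodic)
       (simp_all add: theta_quotient_def theta_transform_plus_1[OF sigma_nonzero] theta_plus_1
         theta_transform_plus_period[OF sigma_nonzero] theta_plus_period)
  have shift: "(\<lambda>z. theta_quotient \<sigma> (z + - (of_int m + of_int n * \<sigma>))) = theta_quotient \<sigma>"
  proof
    show "theta_quotient \<sigma> (z + - (of_int m + of_int n * \<sigma>)) = theta_quotient \<sigma> z" for z
      using periodic[of "z + - (of_int m + of_int n * \<sigma>)"] by (simp add: algebra_simps)
  qed
  have "theta_zero \<sigma> - - (of_int m + of_int n * \<sigma>) = p"
    unfolding p by simp
  with LIM_offset[OF theta_quotient_tendsto_theta_zero, of "- (of_int m + of_int n * \<sigma>)"]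
  show ?thesis
    unfolding shift by simp
qed

definition theta_quotient_ext :: "complex \<Rightarrow> complex" where
  "theta_quotient_ext z = (if theta \<sigma> z = 0 then theta_quotient_lim else theta_quotient \<sigma> z)"

text \<open>The zeros of \<open>theta \<sigma>\<close> are removable singularities of the quotient, since
  \<open>theta_transform \<sigma>\<close> vanishes at each of them as well and they are simple.\<close>

lemma holomorphic_theta_quotient_ext: "theta_quotient_ext holomorphic_on UNIV"
proof -
  have "\<exists>e>0. theta_quotient_ext holomorphic_on ball p e" for p
  proof (cases "theta \<sigma> p = 0")
    case False
    have "isCont (theta \<sigma>) p"
      using holomorphic_on_imp_continuous_on[OF holomorphic_theta[OF sp]]
      by (simp add: continuous_on_eq_continuous_at)
    from continuous_at_avoid[OF this False]
    obtain e where e: "e > 0" "\<And>y. dist p y < e \<Longrightarrow> theta \<sigma> y \<noteq> 0"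
      by blast
    have "(\<lambda>z. theta_transform \<sigma> z / theta \<sigma> z) holomorphic_on ball p e"
      using e by (intro holomorphic_on_divide holomorphic_on_subset[OF holomorphic_theta_transform[OF sp]]
          holomorphic_on_subset[OF holomorphic_theta[OF sp]]) auto
    then have "theta_quotient_ext holomorphic_on ball p e"
      by (rule holomorphic_transform) (use e in \<open>auto simp: theta_quotient_ext_def theta_quotient_def\<close>)
    with e show ?thesis by blast
  next
    case True
    define d where "d = min 1 (Im \<sigma>)"
    have "theta_quotient \<sigma> holomorphic_on ball p d - {p}"
      unfolding theta_quotient_def[abs_def] d_def
      by (intro holomorphic_on_divide holomorphic_on_subset[OF holomorphic_theta_transform[OF sp]]
          holomorphic_on_subset[OF holomorphic_theta[OF sp]]) (use theta_nonzero_near_zero[OF True] in auto)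
    then have "(\<lambda>y. if y = p then theta_quotient_lim else theta_quotient \<sigma> y) holomorphic_on ball p d"
      by (rule removable_singularity[OF _ _ theta_quotient_tendsto[OF True]]) simp
    then have "theta_quotient_ext holomorphic_on ball p d"
      by (rule holomorphic_transform)
         (use True theta_nonzero_near_zero[OF True] in \<open>auto simp: theta_quotient_ext_def d_def\<close>)
    moreover have "d > 0" using sp by (simp add: d_def)
    ultimately show ?thesis by blast
  qed
  then show ?thesis
    by (intro analytic_imp_holomorphic) (auto simp: analytic_on_def)
qed

lemma bounded_theta_quotient_ext: "bounded (range theta_quotient_ext)"
proof (rule bounded_range_lattice_periodic[OF sp])
  show "continuous_on UNIV theta_quotient_ext"
    by (rule holomorphic_on_imp_continuous_on[OF holomorphic_theta_quotient_ext])
  show "theta_quotient_ext (z + 1) = theta_quotient_ext z" for z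
    by (simp add: theta_quotient_ext_def theta_quotient_def theta_plus_1 theta_transform_plus_1[OF sigma_nonzero])
  show "theta_quotient_ext (z + \<sigma>) = theta_quotient_ext z" for z
    by (simp add: theta_quotient_ext_def theta_quotient_def theta_plus_period theta_transform_plus_period[OF sigma_nonzero])
qed

lemma theta_transform_eq_const_mult_theta: "\<exists>C. \<forall>z. theta_transform \<sigma> z = C * theta \<sigma> z"
proof -
  obtain C where C: "\<And>z. theta_quotient_ext z = C"
    using Liouville_theorem[OF holomorphic_theta_quotient_ext bounded_theta_quotient_ext]
    unfolding constant_on_def by blast
  have "theta_transform \<sigma> z = C * theta \<sigma> z" for z
    using C[of z] theta_transform_eq_0[of z]
    by (cases "theta \<sigma> z = 0") (auto simp: theta_quotient_ext_def theta_quotient_def field_simps)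
  then show ?thesis by blast
qed

end

theorem theta_inversion:
  assumes "Im \<sigma> > 0"
  shows "\<exists>C. \<forall>z. exp (- (of_real pi * \<i> * z^2 / \<sigma>)) * theta (- 1 / \<sigma>) (z / \<sigma>) = C * theta \<sigma> z"
  using theta_transform_eq_const_mult_theta[OF assms] unfolding theta_transform_def .

section \<open>Theta functions of level seven\<close>

definition theta7_term :: "complex \<Rightarrow> complex \<Rightarrow> int \<Rightarrow> complex" where
  "theta7_term c \<tau> n = exp (of_real pi * \<i> * of_int n + 7 * of_real pi * \<i> * \<tau> * (of_int n - c)^2)"

definition theta7 :: "complex \<Rightarrow> complex \<Rightarrow> complex" where
  "theta7 c \<tau> = infsum (theta7_term c \<tau>) UNIV"

lemma theta7_term_eq: "theta7_term c \<tau> n = exp (7 * of_real pi * \<i> * \<tau> * c^2) * theta_term (7 * \<tau>) (1/2 - 7 * c * \<tau>) n"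
proof -
  have "of_real pi * \<i> * of_int n + 7 * of_real pi * \<i> * \<tau> * (of_int n - c)^2
      = 7 * of_real pi * \<i> * \<tau> * c^2 + (of_real pi * \<i> * (of_int n)^2 * (7 * \<tau>) + 2 * of_real pi * \<i> * of_int n * (1/2 - 7 * c * \<tau>))"
    by (simp add: algebra_simps power2_eq_square)
  then show ?thesis unfolding theta7_term_def theta_term_def by (simp only: exp_add)
qed

lemma theta7_eq_theta: "theta7 c \<tau> = exp (7 * of_real pi * \<i> * \<tau> * c^2) * theta (7 * \<tau>) (1/2 - 7 * c * \<tau>)"
proof -
  have "theta7_term c \<tau> = (\<lambda>n. exp (7 * of_real pi * \<i> * \<tau> * c^2) * theta_term (7 * \<tau>) (1/2 - 7 * c * \<tau>) n)"
    by (rule ext) (rule theta7_term_eq)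
  then show ?thesis unfolding theta7_def theta_def by (simp add: infsum_cmult_right')
qed

lemma qpow_add: "qpow \<tau> (a + b) = qpow \<tau> a * qpow \<tau> b"
  unfolding qpow_def by (simp add: exp_add[symmetric] algebra_simps)

lemma norm_qpow: "norm (qpow \<tau> a) = exp (- 2 * pi * a * Im \<tau>)"
  unfolding qpow_def by (simp add: norm_exp_eq_Re)

lemma qpow_nonzero: "qpow \<tau> a \<noteq> 0" by (simp add: qpow_def)

definition qprod7 :: "complex \<Rightarrow> real \<Rightarrow> complex" where
  "qprod7 \<tau> \<alpha> = (\<Prod>n. 1 - qpow \<tau> (7 * real n + \<alpha>))"

lemma convergent_prod_qprod7:
  assumes "Im \<tau> > 0"
  shows "convergent_prod (\<lambda>n. 1 - qpow \<tau> (7 * real n + \<alpha>))"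
proof -
  define r where "r = exp (- 14 * pi * Im \<tau>)"
  have r: "0 \<le> r" "r < 1" using assms by (auto simp: r_def)
  have "summable (\<lambda>n. exp (- 2 * pi * \<alpha> * Im \<tau>) * r ^ n)"
    by (intro summable_mult summable_geometric) (use r in auto)
  moreover have "norm (- qpow \<tau> (7 * real n + \<alpha>)) = exp (- 2 * pi * \<alpha> * Im \<tau>) * r ^ n" for n
  proof -
    have "exp (- 2 * pi * (7 * real n + \<alpha>) * Im \<tau>) = exp (- 2 * pi * \<alpha> * Im \<tau> + real n * (- 14 * pi * Im \<tau>))"
      by (simp add: algebra_simps)
    also have "\<dots> = exp (- 2 * pi * \<alpha> * Im \<tau>) * r ^ n"
      by (simp only: exp_add r_def exp_of_nat_mult)
    finally show ?thesis by (simp add: norm_qpow)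
  qed
  ultimately have "summable (\<lambda>n. norm (- qpow \<tau> (7 * real n + \<alpha>)))" by simp
  from convergent_prod_1_plus_summable[OF this] show ?thesis by simp
qed

lemma qprod7_nonzero:
  assumes "Im \<tau> > 0" "\<alpha> > 0"
  shows "qprod7 \<tau> \<alpha> \<noteq> 0"
  unfolding qprod7_def
proof (rule prodinf_nonzero[OF convergent_prod_qprod7[OF assms(1)]])
  fix n
  have "norm (qpow \<tau> (7 * real n + \<alpha>)) < 1"
    unfolding norm_qpow using assms by (simp add: mult_pos_pos)
  then show "1 - qpow \<tau> (7 * real n + \<alpha>) \<noteq> 0" by auto
qed

lemma minus_qpow: "- qpow \<tau> a = exp (of_real pi * \<i> + 2 * of_real pi * \<i> * of_real a * \<tau>)"
  unfolding qpow_def by (simp add: exp_add)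

lemma nome_power_mult_e2pi_theta7:
  "nome (7 * \<tau>) ^ (2*n+1) * e2pi (1/2 - 7 * of_real \<beta> * \<tau>) = - qpow \<tau> (7 * real n + (7/2 - 7*\<beta>))"
  unfolding nome_power_mult_e2pi minus_qpow by (rule arg_cong[where f=exp]) (simp add: algebra_simps)

lemma nome_power_div_e2pi_theta7:
  "nome (7 * \<tau>) ^ (2*n+1) / e2pi (1/2 - 7 * of_real \<beta> * \<tau>) = - qpow \<tau> (7 * real n + (7/2 + 7*\<beta>))"
proof -
  have "nome (7 * \<tau>) ^ (2*n+1) / e2pi (1/2 - 7 * of_real \<beta> * \<tau>)
      = exp (- (of_real pi * \<i>)) * exp (2 * of_real pi * \<i> * of_real (7 * real n + (7/2 + 7*\<beta>)) * \<tau>)"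
    unfolding nome_power_div_e2pi exp_add[symmetric] by (rule arg_cong[where f=exp]) (simp add: algebra_simps)
  then show ?thesis
    unfolding qpow_def by (simp add: exp_minus)
qed

lemma nome_square_power_theta7: "(nome (7 * \<tau>) ^ 2) ^ Suc n = qpow \<tau> (7 * real n + 7)"
proof -
  have "(nome (7 * \<tau>) ^ 2) ^ Suc n = exp (of_nat (2 * Suc n) * (of_real pi * \<i> * (7 * \<tau>)))"
    unfolding nome_def power_mult[symmetric] by (rule exp_of_nat_mult[symmetric])
  also have "\<dots> = qpow \<tau> (7 * real n + 7)"
    unfolding qpow_def by (rule arg_cong[where f=exp]) (simp add: algebra_simps)
  finally show ?thesis .
qed

text \<open>For \<open>\<beta> = 1/14, 3/14, 5/14\<close> the right-hand side is exactly \<open>u\<close>, \<open>v\<close>, \<open>w\<close>.\<close>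

lemma theta7_product:
  assumes "Im \<tau> > 0"
  shows "theta7 (of_real \<beta>) \<tau>
    = qpow \<tau> (7 * \<beta>^2 / 2) * qprod7 \<tau> 7 * qprod7 \<tau> (7/2 - 7*\<beta>) * qprod7 \<tau> (7/2 + 7*\<beta>)"
proof -
  have "jacobi_prod (nome (7 * \<tau>)) (e2pi (1/2 - 7 * of_real \<beta> * \<tau>))
      = (\<Prod>n. (1 - qpow \<tau> (7 * real n + (7/2 - 7*\<beta>))) * (1 - qpow \<tau> (7 * real n + (7/2 + 7*\<beta>))))"
    unfolding jacobi_prod_def nome_power_mult_e2pi_theta7 nome_power_div_e2pi_theta7 by simp
  also have "\<dots> = qprod7 \<tau> (7/2 - 7*\<beta>) * qprod7 \<tau> (7/2 + 7*\<beta>)"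
    unfolding qprod7_def
    by (rule prodinf_mult[symmetric, OF convergent_prod_qprod7[OF assms] convergent_prod_qprod7[OF assms]])
  moreover have "qpochhammer_inf (nome (7 * \<tau>) ^ 2) = qprod7 \<tau> 7"
    unfolding qpochhammer_inf_def qprod7_def nome_square_power_theta7 ..
  moreover have "exp (7 * of_real pi * \<i> * \<tau> * (of_real \<beta>)^2) = qpow \<tau> (7 * \<beta>^2 / 2)"
    unfolding qpow_def by (rule arg_cong[where f=exp]) (simp add: algebra_simps)
  moreover have "Im (7 * \<tau>) > 0"
    using assms by simp
  ultimately show ?thesis
    unfolding theta7_eq_theta by (simp add: theta_product mult_ac)
qed

lemma theta7_5_nonzero: "Im \<tau> > 0 \<Longrightarrow> theta7 (of_real (5/14)) \<tau> \<noteq> 0"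
  using theta7_product[of \<tau> "5/14"] by (simp add: qpow_nonzero qprod7_nonzero)

lemma theta7_divide_theta7_5:
  assumes "Im \<tau> > 0"
  shows "theta7 (of_real \<beta>) \<tau> / theta7 (of_real (5/14)) \<tau> = qpow \<tau> (7 * \<beta>^2 / 2 - 25/56)
    * (qprod7 \<tau> (7/2 - 7*\<beta>) * qprod7 \<tau> (7/2 + 7*\<beta>) / (qprod7 \<tau> 6 * qprod7 \<tau> 1))"
proof -
  have "qpow \<tau> (7 * \<beta>^2 / 2) = qpow \<tau> (7 * \<beta>^2 / 2 - 25/56) * qpow \<tau> (25/56)"
    by (simp flip: qpow_add)
  moreover have "qpow \<tau> (25/56) \<noteq> 0" "qprod7 \<tau> 7 \<noteq> 0" "qprod7 \<tau> 6 \<noteq> 0" "qprod7 \<tau> 1 \<noteq> 0"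
    using assms by (simp_all add: qpow_nonzero qprod7_nonzero)
  ultimately show ?thesis
    unfolding theta7_product[OF assms] by (simp add: power2_eq_square field_simps)
qed

lemma prodinf_ratio_qprod7:
  assumes sp: "Im \<tau> > 0"
  shows "(\<Prod>n. ((1 - qpow \<tau> (7 * real n + a)) * (1 - qpow \<tau> (7 * real n + b))) /
                ((1 - qpow \<tau> (7 * real n + c)) * (1 - qpow \<tau> (7 * real n + d))))
       = qprod7 \<tau> a * qprod7 \<tau> b / (qprod7 \<tau> c * qprod7 \<tau> d)"
proof -
  have n: "convergent_prod (\<lambda>n. (1 - qpow \<tau> (7 * real n + a)) * (1 - qpow \<tau> (7 * real n + b)))"
    by (rule convergent_prod_mult[OF convergent_prod_qprod7[OF sp] convergent_prod_qprod7[OF sp]])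
  have d: "convergent_prod (\<lambda>n. (1 - qpow \<tau> (7 * real n + c)) * (1 - qpow \<tau> (7 * real n + d)))"
    by (rule convergent_prod_mult[OF convergent_prod_qprod7[OF sp] convergent_prod_qprod7[OF sp]])
  show ?thesis
    unfolding prodinf_divide[OF n d, symmetric] qprod7_def
    by (simp only: prodinf_mult[OF convergent_prod_qprod7[OF sp] convergent_prod_qprod7[OF sp]])
qed

lemma s_fun_eq_theta7:
  assumes "Im \<tau> > 0"
  shows "s_fun \<tau> = theta7 (of_real (1/14)) \<tau> / theta7 (of_real (5/14)) \<tau>"
proof -
  have "\<And>n. real (7 * Suc n - 3) = 7 * real n + 4" "\<And>n. real (7 * Suc n - 4) = 7 * real n + 3"
       "\<And>n. real (7 * Suc n - 1) = 7 * real n + 6" "\<And>n. real (7 * Suc n - 6) = 7 * real n + 1"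
    by simp_all
  note e = this
  have "s_fun \<tau> = qpow \<tau> (-3/7) * (qprod7 \<tau> 4 * qprod7 \<tau> 3 / (qprod7 \<tau> 6 * qprod7 \<tau> 1))"
    unfolding s_fun_def e prodinf_ratio_qprod7[OF assms] ..
  then show ?thesis
    using theta7_divide_theta7_5[OF assms, of "1/14"] by (simp add: power2_eq_square mult_ac)
qed

lemma t_fun_eq_theta7:
  assumes "Im \<tau> > 0"
  shows "t_fun \<tau> = theta7 (of_real (3/14)) \<tau> / theta7 (of_real (5/14)) \<tau>"
proof -
  have "\<And>n. real (7 * Suc n - 2) = 7 * real n + 5" "\<And>n. real (7 * Suc n - 5) = 7 * real n + 2"
       "\<And>n. real (7 * Suc n - 1) = 7 * real n + 6" "\<And>n. real (7 * Suc n - 6) = 7 * real n + 1"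
    by simp_all
  note e = this
  have "t_fun \<tau> = qpow \<tau> (-2/7) * (qprod7 \<tau> 5 * qprod7 \<tau> 2 / (qprod7 \<tau> 6 * qprod7 \<tau> 1))"
    unfolding t_fun_def e prodinf_ratio_qprod7[OF assms] ..
  then show ?thesis
    using theta7_divide_theta7_5[OF assms, of "3/14"] by (simp add: power2_eq_square mult_ac)
qed

section \<open>Transformation under \<open>\<tau> \<mapsto> -1/\<tau>\<close>\<close>

definition theta7_inv_term :: "complex \<Rightarrow> complex \<Rightarrow> int \<Rightarrow> complex" where
  "theta7_inv_term c \<tau> m = exp (of_real pi * \<i> * \<tau> * (2 * of_int m + 1)^2 / 28 + of_real pi * \<i> * c * (2 * of_int m + 1))"

lemma theta7_inv_term_eq:
  assumes "\<tau> \<noteq> 0"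
  shows "theta7_inv_term c \<tau> = (\<lambda>m. exp (7 * of_real pi * \<i> * ((\<tau> / 14 + c)^2 - c^2) / \<tau>)
    * theta_term (\<tau> / 7) (\<tau> / 14 + c) m)"
proof
  fix m
  have "7 * of_real pi * \<i> * ((\<tau> / 14 + c)^2 - c^2) / \<tau>
      + (of_real pi * \<i> * (of_int m)^2 * (\<tau> / 7) + 2 * of_real pi * \<i> * of_int m * (\<tau> / 14 + c))
    = of_real pi * \<i> * \<tau> * (2 * of_int m + 1)^2 / 28 + of_real pi * \<i> * c * (2 * of_int m + 1)"
    using assms by (simp add: field_simps power2_eq_square)
  then show "theta7_inv_term c \<tau> m = exp (7 * of_real pi * \<i> * ((\<tau> / 14 + c)^2 - c^2) / \<tau>)
      * theta_term (\<tau> / 7) (\<tau> / 14 + c) m"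
    unfolding theta7_inv_term_def theta_term_def by (simp add: exp_add[symmetric])
qed

text \<open>The theta inversion formula with \<open>\<sigma> = \<tau>/7\<close> and \<open>z = \<tau>/14 + c\<close>.\<close>

lemma theta7_inversion_series:
  assumes "Im \<tau> > 0"
  obtains C where "\<And>c. theta7 c (- 1 / \<tau>) = C * infsum (theta7_inv_term c \<tau>) UNIV"
    and "\<And>c. theta7_inv_term c \<tau> summable_on UNIV"
proof -
  have \<tau>: "\<tau> \<noteq> 0" and \<sigma>: "Im (\<tau> / 7) > 0"
    using assms by auto
  obtain C where C: "\<And>z. exp (- (of_real pi * \<i> * z^2 / (\<tau> / 7))) * theta (- 1 / (\<tau> / 7)) (z / (\<tau> / 7))
      = C * theta (\<tau> / 7) z"
    using theta_inversion[OF \<sigma>] by blast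
  have "theta7 c (- 1 / \<tau>)
      = exp (- (7 * of_real pi * \<i> * c^2 / \<tau>)) * theta (- 1 / (\<tau> / 7)) ((\<tau> / 14 + c) / (\<tau> / 7))" for c
  proof -
    have "7 * (- 1 / \<tau>) = - 1 / (\<tau> / 7)" "1/2 - 7 * c * (- 1 / \<tau>) = (\<tau> / 14 + c) / (\<tau> / 7)"
      using \<tau> by (simp_all add: field_simps)
    then show ?thesis
      unfolding theta7_eq_theta by simp
  qed
  also have "\<dots> c = C * (exp (7 * of_real pi * \<i> * ((\<tau> / 14 + c)^2 - c^2) / \<tau>) * theta (\<tau> / 7) (\<tau> / 14 + c))"
    for c
  proof -
    have th: "theta (- 1 / (\<tau> / 7)) ((\<tau> / 14 + c) / (\<tau> / 7))
        = exp (of_real pi * \<i> * (\<tau> / 14 + c)^2 / (\<tau> / 7)) * (C * theta (\<tau> / 7) (\<tau> / 14 + c))"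
      using C[of "\<tau> / 14 + c"] by (simp add: exp_minus field_simps)
    have ex: "exp (- (7 * of_real pi * \<i> * c^2 / \<tau>)) * exp (of_real pi * \<i> * (\<tau> / 14 + c)^2 / (\<tau> / 7))
        = exp (7 * of_real pi * \<i> * ((\<tau> / 14 + c)^2 - c^2) / \<tau>)"
      unfolding exp_add[symmetric] by (rule arg_cong[where f=exp]) (use \<tau> in \<open>simp add: field_simps\<close>)
    show ?thesis
      unfolding th ex[symmetric] by (simp only: mult_ac)
  qed
  also have "\<dots> c = C * infsum (theta7_inv_term c \<tau>) UNIV" for c
    unfolding theta7_inv_term_eq[OF \<tau>] theta_def by (simp add: infsum_cmult_right')
  finally show ?thesis
    by (rule that) (simp add: theta7_inv_term_eq[OF \<tau>] summable_on_cmult_right theta_term_summable_on[OF \<sigma>])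
qed

lemma infsum_int_residue_classes:
  fixes g :: "int \<Rightarrow> 'a::banach"
  assumes "g summable_on UNIV" and "0 < p"
  shows "infsum g UNIV = (\<Sum>r<p. infsum (\<lambda>k. g (int p * k + int r)) UNIV)"
proof -
  define B where "B r = range (\<lambda>k::int. int p * k + int r)" for r :: nat
  have "n \<in> (\<Union>r<p. B r)" for n :: int
  proof -
    have "n = int p * (n div int p) + int (nat (n mod int p))" and "nat (n mod int p) < p"
      using assms(2) by (simp_all add: nat_less_iff)
    then show ?thesis unfolding B_def by blast
  qed
  then have U: "(\<Union>r<p. B r) = UNIV" by blast
  have "B r \<inter> B r' = {}" if "r < p" "r' < p" "r \<noteq> r'" for r r'
  proof -
    have "int p * k + int r \<noteq> int p * k' + int r'" for k k' :: int
    proof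
      assume "int p * k + int r = int p * k' + int r'"
      then have "(int p * k + int r) mod int p = (int p * k' + int r') mod int p" by simp
      with that show False by simp
    qed
    then show ?thesis unfolding B_def by blast
  qed
  then have "(\<Sum>r<p. infsum g (B r)) = infsum g (\<Union>r<p. B r)"
    by (intro sum_infsum summable_on_subset_banach[OF assms(1)]) auto
  moreover have "infsum g (B r) = infsum (\<lambda>k. g (int p * k + int r)) UNIV" for r
  proof -
    have "inj (\<lambda>k::int. int p * k + int r)"
      using assms(2) by (auto simp: inj_def)
    from infsum_reindex[OF this, of g] show ?thesis by (simp add: B_def o_def)
  qed
  ultimately show ?thesis using U by simp
qed

definition xi :: complex where "xi = exp (of_real pi * \<i> / 14)"

lemma theta7_inv_term_dissect:
  "theta7_inv_term (of_real ((2 * real j + 1) / 14)) \<tau> (7 * k + int r)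
     = xi ^ ((2*j+1)*(2*r+1)) * theta7_term (of_real (- (2 * real r + 1) / 14)) \<tau> k"
proof -
  define F where "F = of_real pi * \<i> * of_int k + 7 * of_real pi * \<i> * \<tau> * (of_int k - of_real (- (2 * real r + 1) / 14))^2"
  define N where "N = of_nat ((2*j+1)*(2*r+1)) * (of_real pi * \<i> / 14)"
  have eq: "of_real pi * \<i> * \<tau> * (2 * of_int (7 * k + int r) + 1)^2 / 28
        + of_real pi * \<i> * of_real ((2 * real j + 1) / 14) * (2 * of_int (7 * k + int r) + 1)
      = (F + N) + 2 * of_real pi * \<i> * of_int (int j * k)"
    unfolding F_def N_def by (simp add: field_simps power2_eq_square)
  have "theta7_inv_term (of_real ((2 * real j + 1) / 14)) \<tau> (7 * k + int r) = exp ((F + N) + 2 * of_real pi * \<i> * of_int (int j * k))"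
    unfolding theta7_inv_term_def eq ..
  also have "\<dots> = exp (F + N)" by (simp only: exp_add exp_2pi_i_of_int mult_1_right)
  also have "\<dots> = exp F * exp N" by (rule exp_add)
  also have "exp F = theta7_term (of_real (- (2 * real r + 1) / 14)) \<tau> k" unfolding F_def theta7_term_def ..
  also have "exp N = xi ^ ((2*j+1)*(2*r+1))" unfolding N_def xi_def by (rule exp_of_nat_mult)
  finally show ?thesis by (simp only: mult.commute)
qed

lemma theta7_minus: "theta7 (- c) \<tau> = theta7 c \<tau>"
proof -
  have t: "theta7_term (- c) \<tau> n = theta7_term c \<tau> (- n)" for n
  proof -
    have "of_real pi * \<i> * of_int n + 7 * of_real pi * \<i> * \<tau> * (of_int n - - c)^2
        = (of_real pi * \<i> * of_int (- n) + 7 * of_real pi * \<i> * \<tau> * (of_int (- n) - c)^2)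
          + 2 * of_real pi * \<i> * of_int n"
      by (simp add: algebra_simps power2_eq_square)
    then show ?thesis unfolding theta7_term_def by (simp only: exp_add exp_2pi_i_of_int mult_1_right)
  qed
  have "theta7_term (- c) \<tau> = (\<lambda>n. theta7_term c \<tau> (- n))" by (rule ext) (rule t)
  then show ?thesis
    unfolding theta7_def by (simp add: infsum_int_uminus)
qed

lemma theta7_one_minus: "theta7 (1 - c) \<tau> = - theta7 c \<tau>"
proof -
  have t: "theta7_term (1 - c) \<tau> (1 - n) = - theta7_term c \<tau> n" for n
  proof -
    have "of_real pi * \<i> * of_int (1 - n) + 7 * of_real pi * \<i> * \<tau> * (of_int (1 - n) - (1 - c))^2
        = of_real pi * \<i> + (of_real pi * \<i> * of_int n + 7 * of_real pi * \<i> * \<tau> * (of_int n - c)^2)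
          + 2 * of_real pi * \<i> * of_int (- n)"
      by (simp add: algebra_simps power2_eq_square)
    then show ?thesis unfolding theta7_term_def by (simp only: exp_add exp_2pi_i_of_int mult_1_right exp_pi_i) simp
  qed
  have "theta7 (1 - c) \<tau> = infsum (\<lambda>n. theta7_term (1 - c) \<tau> (1 - n)) UNIV"
    using infsum_int_shift[of "\<lambda>n. theta7_term (1 - c) \<tau> (- n)" "-1"]
    unfolding theta7_def infsum_int_uminus by simp
  also have "\<dots> = infsum (\<lambda>n. - theta7_term c \<tau> n) UNIV" by (simp only: t)
  also have "\<dots> = - theta7 c \<tau>" unfolding theta7_def by (rule infsum_uminus)
  finally show ?thesis .
qed

lemma theta7_inversion_sum:
  assumes "Im \<tau> > 0"
  obtains C where "\<And>j. theta7 (of_real ((2 * real j + 1) / 14)) (- 1 / \<tau>)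
     = C * (\<Sum>r<7. xi ^ ((2*j+1)*(2*r+1)) * theta7 (of_real (- (2 * real r + 1) / 14)) \<tau>)"
proof -
  obtain C where C: "\<And>c. theta7 c (- 1 / \<tau>) = C * infsum (theta7_inv_term c \<tau>) UNIV"
    and summable: "\<And>c. theta7_inv_term c \<tau> summable_on UNIV"
    using theta7_inversion_series[OF assms] by blast
  have dissect: "infsum (theta7_inv_term (of_real ((2 * real j + 1) / 14)) \<tau>) UNIV
     = (\<Sum>r<7. xi ^ ((2*j+1)*(2*r+1)) * theta7 (of_real (- (2 * real r + 1) / 14)) \<tau>)" for j
  proof -
    have "infsum (theta7_inv_term (of_real ((2 * real j + 1) / 14)) \<tau>) UNIV
      = (\<Sum>r<7. infsum (\<lambda>k. theta7_inv_term (of_real ((2 * real j + 1) / 14)) \<tau> (7 * k + int r)) UNIV)"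
      using infsum_int_residue_classes[OF summable, of 7] by simp
    also have "\<dots> = (\<Sum>r<7. infsum (\<lambda>k. xi ^ ((2*j+1)*(2*r+1))
        * theta7_term (of_real (- (2 * real r + 1) / 14)) \<tau> k) UNIV)"
      by (simp only: theta7_inv_term_dissect)
    finally show ?thesis
      unfolding theta7_def by (simp only: infsum_cmult_right')
  qed
  show ?thesis
    by (rule that[of C]) (simp only: C dissect)
qed

lemma xi_pow_14: "xi ^ 14 = -1"
proof -
  have "xi ^ 14 = exp (of_nat 14 * (of_real pi * \<i> / 14))" unfolding xi_def by (rule exp_of_nat_mult[symmetric])
  also have "of_nat 14 * (of_real pi * \<i> / 14) = of_real pi * \<i>" by simp
  finally show ?thesis by simp
qed

lemma zeta7_eq_xi: "zeta7 = xi ^ 4"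
proof -
  have "xi ^ 4 = exp (of_nat 4 * (of_real pi * \<i> / 14))" unfolding xi_def by (rule exp_of_nat_mult[symmetric])
  also have "of_nat 4 * (of_real pi * \<i> / 14) = 2 * of_real pi * \<i> / 7" by simp
  finally show ?thesis by (simp add: zeta7_def)
qed

lemma xi_pow_28: "xi ^ 28 = 1"
proof -
  have "xi ^ 28 = (xi ^ 14) ^ 2" by (simp add: power_mult[symmetric])
  then show ?thesis by (simp add: xi_pow_14)
qed

lemma inverse_zeta7_eq_xi: "inverse zeta7 = xi ^ 24"
proof -
  have "xi ^ 4 * xi ^ 24 = 1" using xi_pow_28 by (simp add: power_add[symmetric])
  then show ?thesis unfolding zeta7_eq_xi by (simp add: inverse_unique)
qed

lemma eta7_1_eq_xi: "eta7 1 = xi ^ 4 + xi ^ 24"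
  unfolding eta7_def power_one_right inverse_zeta7_eq_xi unfolding zeta7_eq_xi ..

lemma eta7_3_eq_xi: "eta7 3 = xi ^ 12 + xi ^ 16"
proof -
  have "(xi ^ 24) ^ 3 = xi ^ 16"
  proof -
    have "(xi ^ 24) ^ 3 = xi ^ 28 * xi ^ 28 * xi ^ 16" by (simp add: power_mult[symmetric] power_add[symmetric])
    then show ?thesis by (simp add: xi_pow_28)
  qed
  moreover have "zeta7 ^ 3 = xi ^ 12" by (simp add: zeta7_eq_xi power_mult[symmetric])
  ultimately show ?thesis by (simp add: eta7_def inverse_zeta7_eq_xi)
qed

lemma eps1_eq_xi: "eps1 = 1 + xi ^ 4 + xi ^ 24"
  unfolding eps1_def eta7_1_eq_xi by simp

lemma zeta7_neq_1: "zeta7 \<noteq> 1"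
proof
  assume "zeta7 = 1"
  then have "exp (2 * of_real pi * \<i> / 7) = 1" by (simp add: zeta7_def)
  then obtain n :: int where "Im (2 * of_real pi * \<i> / 7) = of_int (2 * n) * pi"
    unfolding exp_eq_1 by blast
  then have "2 * pi / 7 = 2 * of_int n * pi" by simp
  then have "1 = 7 * (of_int n :: real)" by (simp add: field_simps)
  then have "(1::int) = 7 * n" by linarith
  then show False by presburger
qed

lemma sum_xi_powers: "1 + xi ^ 4 + xi ^ 8 + xi ^ 12 + xi ^ 16 + xi ^ 20 + xi ^ 24 = 0"
proof -
  have z7: "(xi ^ 4) ^ 7 = 1" using xi_pow_28 by (simp add: power_mult[symmetric])
  have "(xi ^ 4 - 1) * (1 + xi ^ 4 + xi ^ 8 + xi ^ 12 + xi ^ 16 + xi ^ 20 + xi ^ 24) = (xi ^ 4) ^ 7 - 1"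
    by (simp add: algebra_simps power_mult[symmetric] power_add[symmetric])
  also have "\<dots> = 0" using z7 by simp
  finally show ?thesis using zeta7_neq_1 unfolding zeta7_eq_xi by simp
qed

lemma eps1_square: "eps1^2 = eps1 + 1 - eta7 3"
  unfolding eps1_eq_xi eta7_3_eq_xi using sum_xi_powers xi_pow_14 by algebra

lemma xi_power_differences:
  shows "xi - xi ^ 13 = eps1 * (xi ^ 5 - xi ^ 9)"
    and "xi ^ 3 - xi ^ 11 = - eta7 3 * (xi ^ 5 - xi ^ 9)"
    and "xi ^ 3 - xi ^ 39 = - eta7 3 * (xi ^ 5 - xi ^ 9)"
    and "xi ^ 9 - xi ^ 33 = - (xi ^ 5 - xi ^ 9)"
    and "xi ^ 15 - xi ^ 27 = - eps1 * (xi ^ 5 - xi ^ 9)"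
    and "xi ^ 5 - xi ^ 65 = xi ^ 5 - xi ^ 9"
    and "xi ^ 15 - xi ^ 55 = - eps1 * (xi ^ 5 - xi ^ 9)"
    and "xi ^ 25 - xi ^ 45 = - eta7 3 * (xi ^ 5 - xi ^ 9)"
  unfolding eps1_eq_xi eta7_3_eq_xi using xi_pow_14 by algebra+

text \<open>By the symmetries \<open>theta7_minus\<close> and \<open>theta7_one_minus\<close> only the three characteristics
  \<open>1/14, 3/14, 5/14\<close> survive in the dissection; \<open>7/14\<close> contributes zero.\<close>

lemma theta7_inversion_reduced:
  assumes "Im \<tau> > 0"
  obtains C where "\<And>j. theta7 (of_real ((2 * real j + 1) / 14)) (- 1 / \<tau>) = C *
      ((xi ^ (2*j+1) - xi ^ ((2*j+1) * 13)) * theta7 (of_real (1/14)) \<tau>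
     + (xi ^ ((2*j+1) * 3) - xi ^ ((2*j+1) * 11)) * theta7 (of_real (3/14)) \<tau>
     + (xi ^ ((2*j+1) * 5) - xi ^ ((2*j+1) * 9)) * theta7 (of_real (5/14)) \<tau>)"
proof -
  obtain C where C: "\<And>j. theta7 (of_real ((2 * real j + 1) / 14)) (- 1 / \<tau>)
     = C * (\<Sum>r<7. xi ^ ((2*j+1)*(2*r+1)) * theta7 (of_real (- (2 * real r + 1) / 14)) \<tau>)"
    using theta7_inversion_sum[OF assms] by blast
  define F where "F r = theta7 (of_real ((2 * real r + 1) / 14)) \<tau>" for r :: nat
  have minus: "theta7 (of_real (- (2 * real r + 1) / 14)) \<tau> = F r" for r
  proof -
    have "(of_real (- (2 * real r + 1) / 14) :: complex) = - of_real ((2 * real r + 1) / 14)"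
      by (simp only: minus_divide_left[symmetric] of_real_minus)
    then show ?thesis unfolding F_def by (simp only: theta7_minus)
  qed
  have reflect: "F (6 - r) = - F r" if "r \<le> 6" for r
  proof -
    have "(of_real ((2 * real (6 - r) + 1) / 14) :: complex) = 1 - of_real ((2 * real r + 1) / 14)"
      using that by (simp add: of_nat_diff field_simps)
    then show ?thesis unfolding F_def by (simp only: theta7_one_minus)
  qed
  have F: "F 3 = 0" "F 4 = - F 2" "F 5 = - F 1" "F 6 = - F 0"
    using reflect[of 3] reflect[of 2] reflect[of 1] reflect[of 0] by simp_all
  have sum: "(\<Sum>r<7. xi ^ ((2*j+1)*(2*r+1)) * theta7 (of_real (- (2 * real r + 1) / 14)) \<tau>)
      = (xi ^ (2*j+1) - xi ^ ((2*j+1) * 13)) * F 0 + (xi ^ ((2*j+1) * 3) - xi ^ ((2*j+1) * 11)) * F 1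
        + (xi ^ ((2*j+1) * 5) - xi ^ ((2*j+1) * 9)) * F 2" for j
  proof -
    define c where "c r = xi ^ ((2*j+1)*(2*r+1))" for r
    have sum7: "(\<Sum>r<7. g r) = g 0 + g 1 + g 2 + g 3 + g 4 + g 5 + g 6" for g :: "nat \<Rightarrow> complex"
      by (simp add: eval_nat_numeral)
    have "(\<Sum>r<7. c r * F r) = (c 0 - c 6) * F 0 + (c 1 - c 5) * F 1 + (c 2 - c 4) * F 2"
      unfolding sum7 F by (simp add: algebra_simps)
    then show ?thesis
      unfolding minus by (simp add: c_def)
  qed
  have "F 0 = theta7 (of_real (1/14)) \<tau>" "F 1 = theta7 (of_real (3/14)) \<tau>"
    "F 2 = theta7 (of_real (5/14)) \<tau>"
    by (simp_all add: F_def)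
  then show ?thesis
    by (intro that) (simp only: C sum)
qed

lemma theta7_inversion_linear:
  assumes "Im \<tau> > 0"
  obtains K where
    "theta7 (of_real (1/14)) (- 1 / \<tau>) = K * (eps1 * theta7 (of_real (1/14)) \<tau>
       - eta7 3 * theta7 (of_real (3/14)) \<tau> + theta7 (of_real (5/14)) \<tau>)"
    "theta7 (of_real (3/14)) (- 1 / \<tau>) = K * (- eta7 3 * theta7 (of_real (1/14)) \<tau>
       - theta7 (of_real (3/14)) \<tau> - eps1 * theta7 (of_real (5/14)) \<tau>)"
    "theta7 (of_real (5/14)) (- 1 / \<tau>) = K * (theta7 (of_real (1/14)) \<tau>
       - eps1 * theta7 (of_real (3/14)) \<tau> - eta7 3 * theta7 (of_real (5/14)) \<tau>)"
proof -
  obtain C where C: "\<And>j. theta7 (of_real ((2 * real j + 1) / 14)) (- 1 / \<tau>) = C *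
      ((xi ^ (2*j+1) - xi ^ ((2*j+1) * 13)) * theta7 (of_real (1/14)) \<tau>
     + (xi ^ ((2*j+1) * 3) - xi ^ ((2*j+1) * 11)) * theta7 (of_real (3/14)) \<tau>
     + (xi ^ ((2*j+1) * 5) - xi ^ ((2*j+1) * 9)) * theta7 (of_real (5/14)) \<tau>)"
    using theta7_inversion_reduced[OF assms] by blast
  define A B D where "A = theta7 (of_real (1/14)) \<tau>" and "B = theta7 (of_real (3/14)) \<tau>"
    and "D = theta7 (of_real (5/14)) \<tau>"
  have "theta7 (of_real (1/14)) (- 1 / \<tau>) = C * ((xi - xi ^ 13) * A + (xi ^ 3 - xi ^ 11) * B + (xi ^ 5 - xi ^ 9) * D)"
    "theta7 (of_real (3/14)) (- 1 / \<tau>) = C * ((xi ^ 3 - xi ^ 39) * A + (xi ^ 9 - xi ^ 33) * B + (xi ^ 15 - xi ^ 27) * D)"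
    "theta7 (of_real (5/14)) (- 1 / \<tau>) = C * ((xi ^ 5 - xi ^ 65) * A + (xi ^ 15 - xi ^ 55) * B + (xi ^ 25 - xi ^ 45) * D)"
    using C[of 0] C[of 1] C[of 2] by (simp_all add: A_def B_def D_def)
  note eqs = this[unfolded xi_power_differences]
  show ?thesis
    by (rule that[of "C * (xi ^ 5 - xi ^ 9)"])
       (unfold A_def[symmetric] B_def[symmetric] D_def[symmetric]; use eqs in algebra)+
qed

theorem theorem2:
  fixes \<tau> :: complex
  assumes "Im \<tau> > 0"
  shows "s_fun (-1 / \<tau>) =
           (eps1 * s_fun \<tau> - eta7 3 * t_fun \<tau> + 1) / (s_fun \<tau> - eps1 * t_fun \<tau> - eta7 3)
       \<and> (eps1 * s_fun \<tau> - eta7 3 * t_fun \<tau> + 1) / (s_fun \<tau> - eps1 * t_fun \<tau> - eta7 3) =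
           (eps1 * s_fun \<tau> + (eps1^2 - eps1 - 1) * t_fun \<tau> + 1) /
           (s_fun \<tau> - eps1 * t_fun \<tau> + eps1^2 - eps1 - 1)
       \<and> t_fun (-1 / \<tau>) =
           (- eta7 3 * s_fun \<tau> - t_fun \<tau> - eps1) / (s_fun \<tau> - eps1 * t_fun \<tau> - eta7 3)
       \<and> (- eta7 3 * s_fun \<tau> - t_fun \<tau> - eps1) / (s_fun \<tau> - eps1 * t_fun \<tau> - eta7 3) =
           ((eps1^2 - eps1 - 1) * s_fun \<tau> - t_fun \<tau> - eps1) /
           (s_fun \<tau> - eps1 * t_fun \<tau> + eps1^2 - eps1 - 1)"
proof -
  define A B D where "A = theta7 (of_real (1/14)) \<tau>" and "B = theta7 (of_real (3/14)) \<tau>"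
    and "D = theta7 (of_real (5/14)) \<tau>"
  obtain K where K: "theta7 (of_real (1/14)) (- 1 / \<tau>) = K * (eps1 * A - eta7 3 * B + D)"
    "theta7 (of_real (3/14)) (- 1 / \<tau>) = K * (- eta7 3 * A - B - eps1 * D)"
    "theta7 (of_real (5/14)) (- 1 / \<tau>) = K * (A - eps1 * B - eta7 3 * D)"
    using theta7_inversion_linear[OF assms] unfolding A_def B_def D_def by blast
  have inv: "Im (- 1 / \<tau>) > 0"
    by (rule Im_minus_inverse_pos[OF assms])
  have D: "D \<noteq> 0" and "K \<noteq> 0"
    using theta7_5_nonzero[OF assms] theta7_5_nonzero[OF inv] K(3) by (auto simp: D_def)
  then have quot: "K * X / (K * Y) = (X / D) / (Y / D)" for X Y
    by (cases "Y = 0") (simp_all add: field_simps)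
  have "s_fun (-1 / \<tau>) =
      (eps1 * s_fun \<tau> - eta7 3 * t_fun \<tau> + 1) / (s_fun \<tau> - eps1 * t_fun \<tau> - eta7 3)"
    "t_fun (-1 / \<tau>) =
      (- eta7 3 * s_fun \<tau> - t_fun \<tau> - eps1) / (s_fun \<tau> - eps1 * t_fun \<tau> - eta7 3)"
    unfolding s_fun_eq_theta7[OF inv] t_fun_eq_theta7[OF inv] K(1-3) quot
      s_fun_eq_theta7[OF assms] t_fun_eq_theta7[OF assms] A_def[symmetric] B_def[symmetric] D_def[symmetric]
    using D by (simp_all add: diff_divide_distrib add_divide_distrib)
  then show ?thesis
    unfolding eps1_square by (simp add: algebra_simps)
qed

end
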